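(* Let $I$ be a $*$-ideal of a $*$-algebra $\mathcal A$. Then $I$ is real and $\dim(\mathcal A/I)<\infty$ if and only if $I=\ker\pi$ for some finite-dimensional $*$-representation $\pi$ of $\mathcal A$. In particular, if $I$ is a $*$-ideal of $\mathcal A$ with $\dim(\mathcal A/\sqrt[\mathrm{real}]{I})<\infty$, then $\sqrt[\Pi\text{-}\mathrm{hard}]{I}=\sqrt[\mathrm{real}]{I}$.
   Context: $\mathbb F\in\{\mathbb R,\mathbb C\}$. A $*$-algebra is a unital associative $\mathbb F$-algebra $\mathcal A$ with an involution $*$ (conjugate-linear, $(ab)^*=b^*a^*$, $a^{**}=a$). A $*$-ideal is a two-sided ideal $I$ with $I^*=I$. A left ideal $I$ is real if whenever $a_1,\dots,a_n\in\mathcal A$ and $\sum_j a_j^*a_j\in I+I^*$, every $a_j\in I$; a two-sided ideal is real if it is real as a left ideal. The real radical $\sqrt[\mathrm{real}]{I}$ is the intersection of all real left ideals containing $I$. A $*$-representation $\pi$ of $\mathcal A$ is a unital $*$-homomorphism from $\mathcal A$ into the $*$-algebra of adjointable linear operators on a pre-Hilbert space $V_\pi$ over $\mathbb F$; it is finite-dimensional if $\dim V_\pi<\infty$. $\Pi$ denotes the class of finite-dimensional $*$-representations. For a class $\mathcal C$ of $*$-representations, $T\subseteq\mathcal C$ and $\mathcal S\subseteq\mathcal A$: $\mathcal I^{\mathcal C}_{\mathrm{hard}}(T)=\{a\in\mathcal A:\pi(a)=0\ \forall\pi\in T\}$, $V^{\mathcal C}_{\mathrm{hard}}(\mathcal S)=\{\pi\in\mathcal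 C:\pi(s)=0\ \forall s\in\mathcal S\}$, and $\sqrt[\mathcal C\text{-}\mathrm{hard}]{\mathcal S}=\mathcal I^{\mathcal C}_{\mathrm{hard}}(V^{\mathcal C}_{\mathrm{hard}}(\mathcal S))$. *)

theory Defs
  imports "Jordan_Normal_Form.Matrix"
begin

text \<open>Scalars: a field 'k with conjugation (real: identity, complex: cnj).
  A unital associative 'k-algebra is a type 'a of class {ring, monoid_mult}
  together with a scalar multiplication sm; st is the involution.\<close>

definition star_algebra ::
  "('k::conjugatable_field \<Rightarrow> 'a::{ring,monoid_mult} \<Rightarrow> 'a) \<Rightarrow> ('a \<Rightarrow> 'a) \<Rightarrow> bool" where
  "star_algebra sm st \<longleftrightarrow>
     (\<forall>c x y. sm c (x + y) = sm c x + sm c y) \<and>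
     (\<forall>c d x. sm (c + d) x = sm c x + sm d x) \<and>
     (\<forall>c d x. sm (c * d) x = sm c (sm d x)) \<and>
     (\<forall>x. sm 1 x = x) \<and>
     (\<forall>c x y. sm c (x * y) = sm c x * y) \<and>
     (\<forall>c x y. sm c (x * y) = x * sm c y) \<and>
     (\<forall>x y. st (x + y) = st x + st y) \<and>
     (\<forall>c x. st (sm c x) = sm (conjugate c) (st x)) \<and>
     (\<forall>x y. st (x * y) = st y * st x) \<and>
     (\<forall>x. st (st x) = x)"

text \<open>Left ideal (closure under scalars follows from unitality: sm c x = sm c 1 * x).\<close>
definition left_ideal_of :: "'a::{ring,monoid_mult} set \<Rightarrow> bool" where
  "left_ideal_of I \<longleftrightarrow> 0 \<in> I \<and> (\<forall>x\<in>I. \<forall>y\<in>I. x + y \<in> I) \<and> (\<forall>a. \<forall>x\<in>I. a * x \<in> I)"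

definition two_sided_ideal_of :: "'a::{ring,monoid_mult} set \<Rightarrow> bool" where
  "two_sided_ideal_of I \<longleftrightarrow> left_ideal_of I \<and> (\<forall>a. \<forall>x\<in>I. x * a \<in> I)"

definition star_ideal :: "('a::{ring,monoid_mult} \<Rightarrow> 'a) \<Rightarrow> 'a set \<Rightarrow> bool" where
  "star_ideal st I \<longleftrightarrow> two_sided_ideal_of I \<and> st ` I = I"

definition plus_star :: "('a::{ring,monoid_mult} \<Rightarrow> 'a) \<Rightarrow> 'a set \<Rightarrow> 'a set" where
  "plus_star st I = {x + st y | x y. x \<in> I \<and> y \<in> I}"

text \<open>Real left ideal (a two-sided ideal is real iff it is real as a left ideal).\<close>
definition real_ideal :: "('a::{ring,monoid_mult} \<Rightarrow> 'a) \<Rightarrow> 'a set \<Rightarrow> bool" where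
  "real_ideal st I \<longleftrightarrow> left_ideal_of I \<and>
     (\<forall>(n::nat) (a::nat \<Rightarrow> 'a). (\<Sum>j<n. st (a j) * a j) \<in> plus_star st I \<longrightarrow> (\<forall>j<n. a j \<in> I))"

definition real_radical :: "('a::{ring,monoid_mult} \<Rightarrow> 'a) \<Rightarrow> 'a set \<Rightarrow> 'a set" where
  "real_radical st I = \<Inter> {J. real_ideal st J \<and> I \<subseteq> J}"

text \<open>dim (A / I) < \<infinity>: A is spanned modulo I by finitely many elements.\<close>
definition fin_codim :: "('k \<Rightarrow> 'a::{ring,monoid_mult} \<Rightarrow> 'a) \<Rightarrow> 'a set \<Rightarrow> bool" where
  "fin_codim sm I \<longleftrightarrow> (\<exists>B. finite B \<and> (\<forall>a. \<exists>c. a - (\<Sum>b\<in>B. sm (c b) b) \<in> I))"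

definition adj_mat :: "'k::conjugatable_field mat \<Rightarrow> 'k mat" where
  "adj_mat A = mat (dim_col A) (dim_row A) (\<lambda>(i, j). conjugate (A $$ (j, i)))"

text \<open>Finite-dimensional *-representation on 'k^n (standard inner product), n \<ge> 0.\<close>
definition fd_star_rep ::
  "('k::conjugatable_field \<Rightarrow> 'a::{ring,monoid_mult} \<Rightarrow> 'a) \<Rightarrow> ('a \<Rightarrow> 'a) \<Rightarrow> nat \<Rightarrow> ('a \<Rightarrow> 'k mat) \<Rightarrow> bool" where
  "fd_star_rep sm st n \<pi> \<longleftrightarrow>
     (\<forall>a. \<pi> a \<in> carrier_mat n n) \<and>
     \<pi> 1 = 1\<^sub>m n \<and>
     (\<forall>a b. \<pi> (a + b) = \<pi> a + \<pi> b) \<and>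
     (\<forall>c a. \<pi> (sm c a) = c \<cdot>\<^sub>m \<pi> a) \<and>
     (\<forall>a b. \<pi> (a * b) = \<pi> a * \<pi> b) \<and>
     (\<forall>a. \<pi> (st a) = adj_mat (\<pi> a))"

definition rep_kernel :: "nat \<Rightarrow> ('a \<Rightarrow> 'k::zero mat) \<Rightarrow> 'a set" where
  "rep_kernel n \<pi> = {a. \<pi> a = 0\<^sub>m n n}"

text \<open>V_hard^Pi(S) as a predicate on (n, pi), and I_hard^Pi; their composition is the Pi-hard radical.\<close>
definition V_hard_Pi ::
  "('k::conjugatable_field \<Rightarrow> 'a::{ring,monoid_mult} \<Rightarrow> 'a) \<Rightarrow> ('a \<Rightarrow> 'a) \<Rightarrow> 'a set \<Rightarrow> nat \<Rightarrow> ('a \<Rightarrow> 'k mat) \<Rightarrow> bool" where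
  "V_hard_Pi sm st S n \<pi> \<longleftrightarrow> fd_star_rep sm st n \<pi> \<and> (\<forall>s\<in>S. \<pi> s = 0\<^sub>m n n)"

definition I_hard_Pi :: "(nat \<Rightarrow> ('a \<Rightarrow> 'k::zero mat) \<Rightarrow> bool) \<Rightarrow> 'a set" where
  "I_hard_Pi T = {a. \<forall>n \<pi>. T n \<pi> \<longrightarrow> \<pi> a = 0\<^sub>m n n}"

definition Pi_hard_radical ::
  "('k::conjugatable_field \<Rightarrow> 'a::{ring,monoid_mult} \<Rightarrow> 'a) \<Rightarrow> ('a \<Rightarrow> 'a) \<Rightarrow> 'a set \<Rightarrow> 'a set" where
  "Pi_hard_radical sm st S = I_hard_Pi (V_hard_Pi sm st S)"

end

theory Submission
  imports Defs
begin

text \<open>If \<open>I = ker \<pi>\<close>, then \<open>I\<close> is real because the trace of \<open>\<Sum> \<pi>(a\<^sub>j)\<^sup>* \<pi>(a\<^sub>j)\<close> is the sum of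
  the squared moduli of all matrix entries, and \<open>A/I\<close> embeds into matrices.  Conversely, let
  \<open>J\<close> be real of finite codimension.  Over \<open>\<real>\<close>, realness says that no nontrivial sum of
  hermitian squares lies in \<open>J + J\<^sup>*\<close>; in the finite-dimensional space \<open>A/(J + J\<^sup>*)\<close> the
  compact convex hull of the normalised squares \<open>a\<^sup>*a\<close> therefore misses \<open>0\<close>, and pairing
  with its point of minimal norm gives a hermitian functional \<open>\<phi>\<close> vanishing on \<open>J\<close> with
  \<open>\<phi>(a\<^sup>*a) > 0\<close> for \<open>a \<notin> J\<close>; over \<open>\<complex>\<close> one complexifies such a real functional.  The
  GNS construction for the inner product \<open>\<phi>(b\<^sup>*a)\<close> on \<open>A/J\<close> yields a finite-dimensional
  \<open>*\<close>-representation whose kernel lies in \<open>J\<close> and contains every two-sided ideal inside \<open>J\<close>.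
  Applied to \<open>J = I\<close> this gives the characterisation; applied to the real radical of \<open>I\<close>,
  which lies in the kernel of every \<open>*\<close>-representation annihilating \<open>I\<close>, it gives the
  equality of radicals.\<close>

section \<open>Strictly positive functionals for real quadratic maps\<close>

lemma bounded_family_convergent_subseq:
  fixes X :: "nat \<Rightarrow> 'i \<Rightarrow> real"
  assumes "finite S" and "\<And>l s. s \<in> S \<Longrightarrow> \<bar>X l s\<bar> \<le> C"
  shows "\<exists>r. strict_mono r \<and> (\<forall>s\<in>S. convergent (\<lambda>l. X (r l) s))"
  using assms
proof (induction S arbitrary: X rule: finite_induct)
  case empty
  then show ?case by (auto intro: strict_mono_id)
next
  case (insert s0 S)
  obtain r1 where r1: "strict_mono r1" "\<forall>s\<in>S. convergent (\<lambda>l. X (r1 l) s)"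
    using insert.IH[of X] insert.prems by auto
  obtain r2 where r2: "strict_mono r2" "monoseq (\<lambda>l. X (r1 (r2 l)) s0)"
    using seq_monosub[of "\<lambda>l. X (r1 l) s0"] by auto
  have "Bseq (\<lambda>l. X (r1 (r2 l)) s0)"
    using insert.prems by (intro BseqI'[where K=C]) auto
  then have "convergent (\<lambda>l. X (r1 (r2 l)) s0)"
    using Bseq_monoseq_convergent r2 by blast
  moreover have "convergent (\<lambda>l. X (r1 (r2 l)) s)" if "s \<in> S" for s
    using convergent_subseq_convergent[OF _ r2(1), of "\<lambda>l. X (r1 l) s"] r1 that
    by (auto simp: o_def)
  moreover have "strict_mono (r1 \<circ> r2)" using r1 r2 strict_mono_o by blast
  ultimately show ?case by (intro exI[of _ "r1 \<circ> r2"]) (auto simp: o_def)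
qed

definition gram :: "(nat \<Rightarrow> nat \<Rightarrow> real) \<Rightarrow> nat \<Rightarrow> nat \<Rightarrow> nat \<Rightarrow> real" where
  "gram U r i i' = (\<Sum>j<r. U j i * U j i')"

text \<open>One step of a Cholesky factorisation.\<close>
lemma gram_split_rank_one:
  "\<exists>g W. (\<forall>j. W j p = 0) \<and> (\<forall>i i'. gram U r i i' = gram W r i i' + g i * g i')"
proof (cases "gram U r p p = 0")
  case True
  then have "\<forall>j<r. U j p = 0"
    unfolding gram_def by (simp add: sum_nonneg_eq_0_iff)
  then have "gram U r i p = 0" "gram U r p i = 0" for i
    unfolding gram_def by auto
  then have "gram U r i i' = gram (\<lambda>j i. if i = p then 0 else U j i) r i i' + 0 * 0" for i i'
    by (cases "i = p"; cases "i' = p") (auto simp: gram_def)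
  then show ?thesis by (intro exI[of _ "\<lambda>_. 0"] exI[of _ "\<lambda>j i. if i = p then 0 else U j i"]) auto
next
  case False
  then have pos: "gram U r p p > 0"
    unfolding gram_def by (metis (no_types, lifting) order_le_less sum_nonneg zero_le_square)
  define s where "s = sqrt (gram U r p p)"
  have spos: "s > 0" and ss: "s * s = gram U r p p" using pos by (auto simp: s_def)
  define c where "c = (\<lambda>j. U j p / s)"
  define g where "g = (\<lambda>i. \<Sum>j<r. c j * U j i)"
  define W where "W = (\<lambda>j i. U j i - c j * g i)"
  have csum: "(\<Sum>j<r. c j * c j) = 1"
    using ss pos by (simp add: c_def gram_def sum_divide_distrib[symmetric])
  have "g p = s"
    using ss spos by (simp add: g_def c_def gram_def sum_divide_distrib[symmetric] field_simps)
  then have "W j p = 0" for j using spos by (simp add: W_def c_def)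
  moreover have "gram U r i i' = gram W r i i' + g i * g i'" for i i'
  proof -
    have "gram W r i i' = (\<Sum>j<r. U j i * U j i') - g i' * (\<Sum>j<r. c j * U j i)
        - g i * (\<Sum>j<r. c j * U j i') + g i * g i' * (\<Sum>j<r. c j * c j)"
      by (simp add: gram_def W_def algebra_simps sum_subtractf sum_distrib_left sum.distrib)
    then show ?thesis using csum by (simp add: gram_def g_def algebra_simps)
  qed
  ultimately show ?thesis by blast
qed

lemma gram_realised_by_p_rows: "\<exists>V. \<forall>i<p. \<forall>i'<p. gram V p i i' = gram U r i i'"
proof (induction p arbitrary: U)
  case 0
  then show ?case by auto
next
  case (Suc p)
  obtain g W where W: "\<forall>j. W j p = 0" "\<forall>i i'. gram U r i i' = gram W r i i' + g i * g i'"
    using gram_split_rank_one by blast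
  obtain V where V: "\<forall>i<p. \<forall>i'<p. gram V p i i' = gram W r i i'"
    using Suc.IH[of W] by blast
  define V' where "V' = (\<lambda>k i. if k < p then (if i < p then V k i else 0) else g i)"
  have "gram V' (Suc p) i i' = gram U r i i'" if "i < Suc p" "i' < Suc p" for i i'
  proof -
    have e: "gram V' (Suc p) i i' = (\<Sum>k<p. V' k i * V' k i') + g i * g i'"
      by (simp add: gram_def V'_def)
    show ?thesis
    proof (cases "i < p \<and> i' < p")
      case True
      then have "(\<Sum>k<p. V' k i * V' k i') = gram V p i i'"
        by (simp add: V'_def gram_def)
      then show ?thesis using e V True W by simp
    next
      case False
      then have "i = p \<or> i' = p" using that by auto
      then have "gram W r i i' = 0" using W(1) by (auto simp: gram_def)
      moreover have "(\<Sum>k<p. V' k i * V' k i') = 0"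
        using False that by (auto simp: V'_def)
      ultimately show ?thesis using e W by simp
    qed
  qed
  then show ?case by blast
qed

definition quad_map :: "nat \<Rightarrow> (nat \<Rightarrow> nat \<Rightarrow> nat \<Rightarrow> real) \<Rightarrow> (nat \<Rightarrow> real) \<Rightarrow> nat \<Rightarrow> real" where
  "quad_map n E u k = (\<Sum>i<n. \<Sum>i'<n. u i * u i' * E i i' k)"

definition quad_sum :: "nat \<Rightarrow> nat \<Rightarrow> (nat \<Rightarrow> nat \<Rightarrow> nat \<Rightarrow> real) \<Rightarrow> (nat \<Rightarrow> nat \<Rightarrow> real) \<Rightarrow> nat \<Rightarrow> real" where
  "quad_sum r n E U k = (\<Sum>j<r. quad_map n E (U j) k)"

definition family_sqnorm :: "nat \<Rightarrow> nat \<Rightarrow> (nat \<Rightarrow> nat \<Rightarrow> real) \<Rightarrow> real" where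
  "family_sqnorm r n U = (\<Sum>j<r. \<Sum>i<n. (U j i)\<^sup>2)"

lemma quad_map_scale: "quad_map n E (\<lambda>i. a * u i) k = a\<^sup>2 * quad_map n E u k"
  by (simp add: quad_map_def sum_distrib_left algebra_simps power2_eq_square)

lemma quad_sum_eq_gram: "quad_sum r n E U k = (\<Sum>i<n. \<Sum>i'<n. gram U r i i' * E i i' k)"
proof -
  have "quad_sum r n E U k = (\<Sum>j<r. \<Sum>i<n. \<Sum>i'<n. U j i * U j i' * E i i' k)"
    by (simp add: quad_sum_def quad_map_def)
  also have "\<dots> = (\<Sum>i<n. \<Sum>i'<n. \<Sum>j<r. U j i * U j i' * E i i' k)"
    by (subst sum.swap) (intro sum.cong refl sum.swap)
  also have "\<dots> = (\<Sum>i<n. \<Sum>i'<n. gram U r i i' * E i i' k)"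
    by (simp add: gram_def sum_distrib_right)
  finally show ?thesis .
qed

lemma family_sqnorm_eq_gram: "family_sqnorm r n U = (\<Sum>i<n. gram U r i i)"
  unfolding family_sqnorm_def gram_def by (subst sum.swap) (simp add: power2_eq_square)

text \<open>The values of \<open>quad_sum\<close> on normalised families are convex; by the Gram compression
  every such value is already attained by a family of \<open>n\<close> vectors, a compact set.\<close>
lemma quad_sum_convex:
  assumes "family_sqnorm n n V = 1" and "(\<Sum>i<n. (u i)\<^sup>2) = 1" and "0 \<le> t" "t \<le> 1"
  shows "\<exists>W. family_sqnorm n n W = 1 \<and>
    (\<forall>k. quad_sum n n E W k = (1 - t) * quad_sum n n E V k + t * quad_map n E u k)"
proof -
  define U where "U = (\<lambda>j. if j < n then (\<lambda>i. sqrt (1-t) * V j i) else (\<lambda>i. sqrt t * u i))"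
  obtain W where W: "\<forall>i<n. \<forall>i'<n. gram W n i i' = gram U (Suc n) i i'"
    using gram_realised_by_p_rows by blast
  have "family_sqnorm (Suc n) n U = (1-t) * family_sqnorm n n V + t * (\<Sum>i<n. (u i)\<^sup>2)"
    using assms(3,4) by (simp add: U_def family_sqnorm_def power_mult_distrib sum_distrib_left)
  then have "family_sqnorm n n W = 1"
    using W assms(1,2) by (simp add: family_sqnorm_eq_gram)
  moreover have "quad_sum n n E W k = (1 - t) * quad_sum n n E V k + t * quad_map n E u k" for k
  proof -
    have "quad_sum n n E W k = quad_sum (Suc n) n E U k"
      using W by (simp add: quad_sum_eq_gram)
    also have "\<dots> = (1 - t) * quad_sum n n E V k + t * quad_map n E u k"
      using assms(3,4)
      by (simp add: quad_sum_def U_def quad_map_scale[where u="V _"] quad_map_scale sum_distrib_left)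
    finally show ?thesis .
  qed
  ultimately show ?thesis by blast
qed

lemma nonneg_if_nonneg_perturbation:
  fixes x y :: real
  assumes "\<And>t. 0 < t \<Longrightarrow> t < 1 \<Longrightarrow> 0 \<le> 2*x + t*y" and "y \<ge> 0"
  shows "0 \<le> x"
proof (rule ccontr)
  assume "\<not> 0 \<le> x"
  then have xn: "x < 0" by simp
  define t where "t = min (1/2) (-x/(y+1))"
  have "x/(y+1) < 0" using xn assms(2) by (simp add: divide_neg_pos)
  then have tpos: "0 < t" "t < 1" by (auto simp: t_def)
  have "t * y \<le> (-x/(y+1)) * y" using assms(2) by (intro mult_right_mono) (auto simp: t_def)
  also have "\<dots> = -x * (y/(y+1))" by simp
  also have "\<dots> < -x * 1" using xn assms(2) by (intro mult_strict_left_mono) auto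
  finally have "2*x + t*y < x" by simp
  with assms(1)[OF tpos] xn show False by simp
qed

lemma min_norm_on_segment_inner_ge:
  fixes d q :: "nat \<Rightarrow> real"
  assumes min: "\<And>t. 0 < t \<Longrightarrow> t < 1 \<Longrightarrow> (\<Sum>k<m. (d k)\<^sup>2) \<le> (\<Sum>k<m. ((1-t) * d k + t * q k)\<^sup>2)"
  shows "(\<Sum>k<m. (d k)\<^sup>2) \<le> (\<Sum>k<m. d k * q k)"
proof -
  define x where "x = (\<Sum>k<m. d k * (q k - d k))"
  define y where "y = (\<Sum>k<m. (q k - d k)\<^sup>2)"
  have "0 \<le> 2*x + t*y" if t: "0 < t" "t < 1" for t
  proof -
    have "(\<Sum>k<m. ((1-t) * d k + t * q k)\<^sup>2)
        = (\<Sum>k<m. (d k)\<^sup>2 + 2*t*(d k * (q k - d k)) + t\<^sup>2 * (q k - d k)\<^sup>2)"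
      by (intro sum.cong refl) (simp add: power2_eq_square algebra_simps)
    also have "\<dots> = (\<Sum>k<m. (d k)\<^sup>2) + 2*t*x + t\<^sup>2*y"
      by (simp add: sum.distrib sum_distrib_left x_def y_def)
    finally have "0 \<le> t * (2*x + t*y)"
      using min[OF t] by (simp add: power2_eq_square algebra_simps)
    then show ?thesis using t by (simp add: zero_le_mult_iff)
  qed
  moreover have "0 \<le> y" unfolding y_def by (auto intro: sum_nonneg)
  ultimately have "0 \<le> x" by (rule nonneg_if_nonneg_perturbation)
  then show ?thesis
    by (simp add: x_def algebra_simps sum_subtractf power2_eq_square)
qed

lemma family_sqnorm_unit_exists:
  assumes "n > 0" shows "\<exists>V. family_sqnorm n n V = 1"
proof -
  define V :: "nat \<Rightarrow> nat \<Rightarrow> real" where "V = (\<lambda>j i. if j = 0 \<and> i = 0 then 1 else 0)"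
  have "(V j i)\<^sup>2 = (if j = 0 then (if i = 0 then 1 else 0) else 0)" for j i
    by (simp add: V_def)
  then have "(\<Sum>i<n. (V j i)\<^sup>2) = (if j = 0 then 1 else 0)" for j
    using assms by (cases "j = 0") simp_all
  then have "family_sqnorm n n V = 1" using assms by (simp add: family_sqnorm_def)
  then show ?thesis by blast
qed

lemma family_sqnorm_entry_bound:
  assumes "family_sqnorm n n V = 1" "j < n" "i < n"
  shows "\<bar>V j i\<bar> \<le> 1"
proof -
  have "(V j i)\<^sup>2 \<le> (\<Sum>i'<n. (V j i')\<^sup>2)"
    using assms by (intro member_le_sum) auto
  also have "\<dots> \<le> family_sqnorm n n V"
    unfolding family_sqnorm_def using assms
    by (intro member_le_sum[of _ _ "\<lambda>j. \<Sum>i'<n. (V j i')\<^sup>2"]) (auto intro: sum_nonneg)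
  finally show ?thesis using assms(1) by (simp add: abs_square_le_1)
qed

lemma quad_sum_min_norm_attained:
  assumes "n > 0"
  shows "\<exists>V. family_sqnorm n n V = 1 \<and> (\<forall>W. family_sqnorm n n W = 1 \<longrightarrow>
    (\<Sum>k<m. (quad_sum n n E V k)\<^sup>2) \<le> (\<Sum>k<m. (quad_sum n n E W k)\<^sup>2))"
proof -
  define N where "N = (\<lambda>V. \<Sum>k<m. (quad_sum n n E V k)\<^sup>2)"
  define K where "K = {V. family_sqnorm n n V = 1}"
  have Kne: "K \<noteq> {}" using family_sqnorm_unit_exists[OF assms] by (auto simp: K_def)
  define \<delta> where "\<delta> = (INF V\<in>K. N V)"
  have bdd: "bdd_below (N ` K)"
    by (rule bdd_belowI[of _ 0]) (auto simp: N_def intro: sum_nonneg)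
  have "\<exists>V\<in>K. N V < \<delta> + 1 / Suc l" for l
    using cINF_less_iff[OF Kne bdd, of "\<delta> + 1 / Suc l"] by (simp add: \<delta>_def)
  then obtain Vs where Vs: "\<And>l. Vs l \<in> K" "\<And>l. N (Vs l) < \<delta> + 1 / Suc l"
    by metis
  have "\<bar>Vs l j i\<bar> \<le> 1" if "(j, i) \<in> {..<n} \<times> {..<n}" for l j i
    using family_sqnorm_entry_bound[of n "Vs l" j i] Vs(1) that by (simp add: K_def)
  then obtain r where r: "strict_mono r"
    "\<forall>s\<in>{..<n} \<times> {..<n}. convergent (\<lambda>l. Vs (r l) (fst s) (snd s))"
    using bounded_family_convergent_subseq[of "{..<n} \<times> {..<n}" "\<lambda>l s. Vs l (fst s) (snd s)" 1]
    by auto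
  define V where "V = (\<lambda>j i. lim (\<lambda>l. Vs (r l) j i))"
  have lim: "(\<lambda>l. Vs (r l) j i) \<longlonglongrightarrow> V j i" if "j < n" "i < n" for j i
    using r(2) that unfolding V_def by (auto simp: convergent_LIMSEQ_iff)
  have "(\<lambda>l. family_sqnorm n n (Vs (r l))) \<longlonglongrightarrow> family_sqnorm n n V"
    unfolding family_sqnorm_def by (intro tendsto_sum tendsto_power lim) auto
  moreover have "family_sqnorm n n (Vs (r l)) = 1" for l using Vs(1) by (simp add: K_def)
  ultimately have "family_sqnorm n n V = 1" by (simp add: LIMSEQ_const_iff)
  moreover have "N V \<le> N W" if "family_sqnorm n n W = 1" for W
  proof -
    have "(\<lambda>l. N (Vs (r l))) \<longlonglongrightarrow> N V"
      unfolding N_def quad_sum_def quad_map_def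
      by (intro tendsto_sum tendsto_power tendsto_mult tendsto_const lim) auto
    moreover have "(\<lambda>l. \<delta> + inverse (real (Suc l))) \<longlonglongrightarrow> \<delta> + 0"
      by (intro tendsto_add tendsto_const LIMSEQ_inverse_real_of_nat)
    moreover have "N (Vs (r l)) \<le> \<delta> + inverse (real (Suc l))" for l
    proof -
      have "1 / real (Suc (r l)) \<le> 1 / real (Suc l)"
        using seq_suble[OF r(1), of l] by (intro divide_left_mono) auto
      then show ?thesis using Vs(2)[of "r l"] by (simp add: inverse_eq_divide)
    qed
    ultimately have "N V \<le> \<delta>" using LIMSEQ_le by fastforce
    also have "\<delta> \<le> N W"
      unfolding \<delta>_def using bdd that by (intro cINF_lower) (auto simp: K_def)
    finally show ?thesis .
  qed
  ultimately show ?thesis unfolding N_def by blast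
qed

text \<open>Pair with the point \<open>d\<close> of minimal norm in the convex hull of the normalised values;
  realness of the quadratic map is exactly what makes \<open>d \<noteq> 0\<close>.\<close>
lemma quad_map_positive_functional:
  assumes real: "\<And>(r::nat) U. (\<forall>k<m. quad_sum r n E U k = 0) \<Longrightarrow> \<forall>j<r. \<forall>i<n. U j i = 0"
  shows "\<exists>w. \<forall>u. (\<exists>i<n. u i \<noteq> 0) \<longrightarrow> 0 < (\<Sum>k<m. w k * quad_map n E u k)"
proof (cases "n = 0")
  case False
  then obtain V where V: "family_sqnorm n n V = 1" and
    min: "\<And>W. family_sqnorm n n W = 1 \<Longrightarrow>
      (\<Sum>k<m. (quad_sum n n E V k)\<^sup>2) \<le> (\<Sum>k<m. (quad_sum n n E W k)\<^sup>2)"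
    using quad_sum_min_norm_attained by blast
  define d where "d = quad_sum n n E V"
  have "(\<Sum>k<m. (d k)\<^sup>2) \<noteq> 0"
  proof
    assume "(\<Sum>k<m. (d k)\<^sup>2) = 0"
    then have "\<forall>j<n. \<forall>i<n. V j i = 0"
      using real[of n V] by (simp add: d_def sum_nonneg_eq_0_iff)
    with V show False by (simp add: family_sqnorm_def)
  qed
  then have d_pos: "0 < (\<Sum>k<m. (d k)\<^sup>2)"
    by (simp add: order_le_neq_trans sum_nonneg)
  have unit: "0 < (\<Sum>k<m. d k * quad_map n E u k)" if "(\<Sum>i<n. (u i)\<^sup>2) = 1" for u :: "nat \<Rightarrow> real"
  proof -
    have "(\<Sum>k<m. (d k)\<^sup>2) \<le> (\<Sum>k<m. ((1-t) * d k + t * quad_map n E u k)\<^sup>2)"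
      if "0 < t" "t < 1" for t
      using quad_sum_convex[OF V \<open>(\<Sum>i<n. (u i)\<^sup>2) = 1\<close>, where t=t and E=E] min that
      by (force simp: d_def)
    then show ?thesis
      using min_norm_on_segment_inner_ge d_pos by fastforce
  qed
  have scale: "\<exists>a>0. \<exists>v. (\<Sum>i<n. (v i)\<^sup>2) = 1 \<and> u = (\<lambda>i. a * v i)" if u: "\<exists>i<n. u i \<noteq> 0" for u :: "nat \<Rightarrow> real"
  proof -
    obtain i0 where i0: "i0 < n" "u i0 \<noteq> 0" using u by blast
    define \<nu> where "\<nu> = (\<Sum>i<n. (u i)\<^sup>2)"
    have "(u i0)\<^sup>2 \<le> \<nu>"
      using i0 unfolding \<nu>_def by (intro member_le_sum) auto
    moreover have "0 < (u i0)\<^sup>2" using i0 by simp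
    ultimately have "0 < \<nu>" by linarith
    moreover have "(\<Sum>i<n. (u i / sqrt \<nu>)\<^sup>2) = 1"
      using \<open>0 < \<nu>\<close> by (simp add: power_divide sum_divide_distrib[symmetric] \<nu>_def[symmetric])
    moreover have "u = (\<lambda>i. sqrt \<nu> * (u i / sqrt \<nu>))" using \<open>0 < \<nu>\<close> by auto
    ultimately show ?thesis by (metis real_sqrt_gt_zero)
  qed
  show ?thesis
  proof (intro exI[of _ d] allI impI)
    fix u :: "nat \<Rightarrow> real"
    assume "\<exists>i<n. u i \<noteq> 0"
    then obtain a v where "a > 0" "(\<Sum>i<n. (v i)\<^sup>2) = 1" "u = (\<lambda>i. a * v i)"
      using scale by blast
    moreover have "(\<Sum>k<m. d k * quad_map n E (\<lambda>i. a * v i) k) = a\<^sup>2 * (\<Sum>k<m. d k * quad_map n E v k)"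
      by (simp add: quad_map_scale sum_distrib_left mult.left_commute)
    ultimately show "0 < (\<Sum>k<m. d k * quad_map n E u k)"
      using unit by simp
  qed
qed simp

section \<open>Linear algebra in \<open>*\<close>-algebras modulo subspaces\<close>

locale star_alg =
  fixes sm :: "'k::conjugatable_field \<Rightarrow> 'a::{ring,monoid_mult} \<Rightarrow> 'a" and st :: "'a \<Rightarrow> 'a"
  assumes star_algebra: "star_algebra sm st"
begin

lemma sm_add: "sm c (x + y) = sm c x + sm c y"
  using star_algebra by (simp add: star_algebra_def)
lemma sm_add_left: "sm (c + d) x = sm c x + sm d x"
  using star_algebra by (simp add: star_algebra_def)
lemma sm_sm: "sm c (sm d x) = sm (c * d) x"
  using star_algebra by (simp add: star_algebra_def)
lemma sm_one[simp]: "sm 1 x = x"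
  using star_algebra by (simp add: star_algebra_def)
lemma sm_mult_left: "sm c (x * y) = sm c x * y"
  using star_algebra by (simp add: star_algebra_def)
lemma sm_mult_right: "sm c (x * y) = x * sm c y"
  using star_algebra unfolding star_algebra_def by metis
lemma st_add: "st (x + y) = st x + st y"
  using star_algebra by (simp add: star_algebra_def)
lemma st_sm: "st (sm c x) = sm (conjugate c) (st x)"
  using star_algebra by (simp add: star_algebra_def)
lemma st_mult: "st (x * y) = st y * st x"
  using star_algebra by (simp add: star_algebra_def)
lemma st_st[simp]: "st (st x) = x"
  using star_algebra by (simp add: star_algebra_def)

lemma sm_zero[simp]: "sm c 0 = 0"
  using sm_add[of c 0 0] by simp
lemma sm_zero_left[simp]: "sm 0 x = 0"
  using sm_add_left[of 0 0 x] by simp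
lemma sm_minus: "sm c (- x) = - sm c x"
  using minus_unique[of "sm c x" "sm c (- x)"] sm_add[of c x "-x"] by simp
lemma sm_diff: "sm c (x - y) = sm c x - sm c y"
  using sm_add[of c x "-y"] sm_minus by simp
lemma sm_minus_left: "sm (- c) x = - sm c x"
  using minus_unique[of "sm c x" "sm (- c) x"] sm_add_left[of c "-c" x] by simp
lemma sm_diff_left: "sm (c - d) x = sm c x - sm d x"
  using sm_add_left[of c "-d" x] sm_minus_left by simp
lemma sm_as_mult: "sm c x = sm c 1 * x"
  using sm_mult_left[of c 1 x] by simp
lemma sm_sum: "sm c (\<Sum>i\<in>I. f i) = (\<Sum>i\<in>I. sm c (f i))"
  by (induction I rule: infinite_finite_induct) (auto simp: sm_add)

lemma st_zero[simp]: "st 0 = 0"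
  using st_add[of 0 0] by simp
lemma st_sum: "st (\<Sum>i\<in>I. f i) = (\<Sum>i\<in>I. st (f i))"
  by (induction I rule: infinite_finite_induct) (auto simp: st_add)

end

definition is_subspace :: "('k \<Rightarrow> 'a::{ring,monoid_mult} \<Rightarrow> 'a) \<Rightarrow> 'a set \<Rightarrow> bool" where
  "is_subspace sm Z \<longleftrightarrow> 0 \<in> Z \<and> (\<forall>x\<in>Z. \<forall>y\<in>Z. x + y \<in> Z) \<and> (\<forall>c. \<forall>x\<in>Z. sm c x \<in> Z)"

context star_alg
begin

lemma subspace_diff: "is_subspace sm Z \<Longrightarrow> x \<in> Z \<Longrightarrow> y \<in> Z \<Longrightarrow> x - y \<in> Z"
  unfolding is_subspace_def using sm_minus_left[of 1 y] by (metis sm_one diff_conv_add_uminus)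
lemma subspace_sum: "is_subspace sm Z \<Longrightarrow> (\<And>i. i \<in> I \<Longrightarrow> f i \<in> Z) \<Longrightarrow> (\<Sum>i\<in>I. f i) \<in> Z"
  unfolding is_subspace_def by (induction I rule: infinite_finite_induct) auto

definition spans_mod :: "'a set \<Rightarrow> 'i set \<Rightarrow> ('i \<Rightarrow> 'a) \<Rightarrow> bool" where
  "spans_mod Z D g \<longleftrightarrow> finite D \<and> (\<forall>a. \<exists>c. a - (\<Sum>d\<in>D. sm (c d) (g d)) \<in> Z)"

definition indep_mod :: "'a set \<Rightarrow> 'i set \<Rightarrow> ('i \<Rightarrow> 'a) \<Rightarrow> bool" where
  "indep_mod Z D g \<longleftrightarrow> (\<forall>c. (\<Sum>d\<in>D. sm (c d) (g d)) \<in> Z \<longrightarrow> (\<forall>d\<in>D. c d = 0))"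

lemma spans_mod_remove_dependent:
  assumes Z: "is_subspace sm Z" and sp: "spans_mod Z D g" and d0: "d0 \<in> D" and c0: "c d0 \<noteq> 0"
    and z: "(\<Sum>d\<in>D. sm (c d) (g d)) \<in> Z"
  shows "spans_mod Z (D - {d0}) g"
  unfolding spans_mod_def
proof (intro conjI allI)
  have fin: "finite D" using sp by (simp add: spans_mod_def)
  then show "finite (D - {d0})" by simp
  define z where "z = (\<Sum>d\<in>D. sm (c d) (g d))"
  have split: "(\<Sum>d\<in>D. sm (f d) (g d)) = sm (f d0) (g d0) + (\<Sum>d\<in>D-{d0}. sm (f d) (g d))" for f
    using fin d0 by (simp add: sum.remove)
  fix a
  obtain e where e: "a - (\<Sum>d\<in>D. sm (e d) (g d)) \<in> Z" using sp unfolding spans_mod_def by blast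
  define lam where "lam = e d0 / c d0"
  have "(\<Sum>d\<in>D-{d0}. sm (e d - lam * c d) (g d))
      = (\<Sum>d\<in>D-{d0}. sm (e d) (g d)) - sm lam (\<Sum>d\<in>D-{d0}. sm (c d) (g d))"
    by (simp add: sm_diff_left sm_sum sm_sm sum_subtractf)
  also have "sm lam (\<Sum>d\<in>D-{d0}. sm (c d) (g d)) = sm lam z - sm (e d0) (g d0)"
    using split[of c] c0 by (simp add: z_def sm_add sm_sm lam_def)
  finally have "a - (\<Sum>d\<in>D-{d0}. sm (e d - lam * c d) (g d)) = (a - (\<Sum>d\<in>D. sm (e d) (g d))) + sm lam z"
    using split[of e] by (simp add: algebra_simps)
  moreover have "sm lam z \<in> Z" using Z z unfolding is_subspace_def z_def by blast
  ultimately show "\<exists>c. a - (\<Sum>d\<in>D-{d0}. sm (c d) (g d)) \<in> Z"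
    using Z e unfolding is_subspace_def by metis
qed

lemma spans_mod_indep_subfamily:
  assumes Z: "is_subspace sm Z" and sp: "spans_mod Z (D::'i set) g"
  shows "\<exists>D'. D' \<subseteq> D \<and> spans_mod Z D' g \<and> indep_mod Z D' g"
proof -
  define P where "P = (\<lambda>k. \<exists>D'. D' \<subseteq> D \<and> spans_mod Z D' g \<and> card D' = k)"
  have "P (card D)" using sp by (auto simp: P_def)
  then have "P (LEAST k. P k)" by (rule LeastI)
  then obtain D' where D': "D' \<subseteq> D" "spans_mod Z D' g" "card D' = (LEAST k. P k)"
    unfolding P_def by blast
  have "indep_mod Z D' g"
    unfolding indep_mod_def
  proof (intro allI impI ballI; rule ccontr)
    fix c d0 assume z: "(\<Sum>d\<in>D'. sm (c d) (g d)) \<in> Z" and d0: "d0 \<in> D'" and c0: "c d0 \<noteq> 0"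
    have "spans_mod Z (D' - {d0}) g" using spans_mod_remove_dependent[OF Z D'(2) d0 c0 z] .
    moreover have "card (D' - {d0}) < card D'"
      using D'(2) d0 unfolding spans_mod_def by (metis card_Diff1_less)
    ultimately have "P (card (D' - {d0}))" using D'(1) unfolding P_def by blast
    then have "(LEAST k. P k) \<le> card (D' - {d0})" by (rule Least_le)
    with \<open>card (D' - {d0}) < card D'\<close> D'(3) show False by simp
  qed
  with D' show ?thesis by blast
qed

lemma spans_mod_basis_nat:
  assumes Z: "is_subspace sm Z" and "spans_mod Z D g"
  shows "\<exists>(n::nat) f. spans_mod Z {..<n} f \<and> indep_mod Z {..<n} f"
proof -
  obtain D' where D': "spans_mod Z D' g" "indep_mod Z D' g"
    using spans_mod_indep_subfamily[OF assms] by blast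
  then have "finite D'" by (simp add: spans_mod_def)
  then obtain h where h: "bij_betw h {..<card D'} D'"
    using ex_bij_betw_nat_finite[of D'] by (auto simp: atLeast0LessThan)
  have re: "(\<Sum>i<card D'. q (h i)) = (\<Sum>d\<in>D'. q d)" for q :: "_ \<Rightarrow> 'a"
    using sum.reindex_bij_betw[OF h] .
  have "spans_mod Z {..<card D'} (g \<circ> h)"
    unfolding spans_mod_def
  proof (intro conjI allI)
    fix a
    obtain c where "a - (\<Sum>d\<in>D'. sm (c d) (g d)) \<in> Z" using D'(1) unfolding spans_mod_def by blast
    then show "\<exists>c. a - (\<Sum>i\<in>{..<card D'}. sm (c i) ((g \<circ> h) i)) \<in> Z"
      by (intro exI[of _ "c \<circ> h"]) (simp add: re[of "\<lambda>d. sm (c d) (g d)"])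
  qed simp
  moreover have "indep_mod Z {..<card D'} (g \<circ> h)"
    unfolding indep_mod_def
  proof (intro allI impI ballI)
    fix c i assume z: "(\<Sum>i\<in>{..<card D'}. sm (c i) ((g \<circ> h) i)) \<in> Z" and i: "i \<in> {..<card D'}"
    define c' where "c' = c \<circ> inv_into {..<card D'} h"
    have inv: "inv_into {..<card D'} h (h i) = i" if "i < card D'" for i
      using h that by (simp add: bij_betw_def inv_into_f_f)
    have "(\<Sum>i<card D'. sm (c i) ((g \<circ> h) i)) = (\<Sum>d\<in>D'. sm (c' d) (g d))"
      using re[of "\<lambda>d. sm (c' d) (g d)"] by (simp add: c'_def inv)
    then have "c' (h i) = 0"
      using z D'(2) h i unfolding indep_mod_def by (auto simp: bij_betw_def lessThan_def)
    then show "c i = 0" using inv i by (simp add: c'_def)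
  qed
  ultimately show ?thesis by blast
qed

lemma subspace_linear_coordinates:
  assumes Z: "is_subspace sm Z" and "spans_mod Z D g"
  shows "\<exists>(m::nat) coord. (\<forall>a b. \<forall>k<m. coord (a + b) k = coord a k + coord b k)
    \<and> (\<forall>c a. \<forall>k<m. coord (sm c a) k = c * coord a k) \<and> (\<forall>a. a \<in> Z \<longleftrightarrow> (\<forall>k<m. coord a k = 0))"
proof -
  obtain m :: nat and e where e: "spans_mod Z {..<m} e" "indep_mod Z {..<m} e"
    using spans_mod_basis_nat[OF assms] by blast
  define coord where "coord = (\<lambda>a. SOME c. a - (\<Sum>k<m. sm (c k) (e k)) \<in> Z)"
  have coord: "a - (\<Sum>k<m. sm (coord a k) (e k)) \<in> Z" for a
  proof -
    have "\<exists>c. a - (\<Sum>k<m. sm (c k) (e k)) \<in> Z" using e(1) unfolding spans_mod_def by (simp add: lessThan_def)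
    then show ?thesis unfolding coord_def by (rule someI_ex)
  qed
  have Z_add: "x + y \<in> Z" and Z_sm: "sm c x \<in> Z" if "x \<in> Z" "y \<in> Z" for x y c
    using Z that unfolding is_subspace_def by blast+
  have uniq: "coord a k = c k" if "a - (\<Sum>k<m. sm (c k) (e k)) \<in> Z" "k < m" for a c k
  proof -
    have "(a - (\<Sum>k<m. sm (c k) (e k))) - (a - (\<Sum>k<m. sm (coord a k) (e k))) \<in> Z"
      using subspace_diff[OF Z that(1) coord] .
    moreover have "(a - (\<Sum>k<m. sm (c k) (e k))) - (a - (\<Sum>k<m. sm (coord a k) (e k)))
        = (\<Sum>k<m. sm (coord a k - c k) (e k))"
      by (simp add: sm_diff_left sum_subtractf)
    ultimately have "(\<Sum>k<m. sm (coord a k - c k) (e k)) \<in> Z" by simp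
    then have "coord a k - c k = 0" using e(2) that(2) unfolding indep_mod_def by auto
    then show ?thesis by simp
  qed
  have "coord (a + b) k = coord a k + coord b k" if "k < m" for a b k
  proof -
    have eq: "(a + b) - (\<Sum>k<m. sm (coord a k + coord b k) (e k))
        = (a - (\<Sum>k<m. sm (coord a k) (e k))) + (b - (\<Sum>k<m. sm (coord b k) (e k)))"
      by (simp add: sm_add_left sum.distrib algebra_simps)
    have "(a + b) - (\<Sum>k<m. sm (coord a k + coord b k) (e k)) \<in> Z"
      unfolding eq using Z_add[OF coord[of a] coord[of b]] .
    from uniq[OF this that] show ?thesis .
  qed
  moreover have "coord (sm c a) k = c * coord a k" if "k < m" for c a k
  proof -
    have eq: "sm c a - (\<Sum>k<m. sm (c * coord a k) (e k)) = sm c (a - (\<Sum>k<m. sm (coord a k) (e k)))"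
      by (simp add: sm_diff sm_sum sm_sm)
    have "sm c a - (\<Sum>k<m. sm (c * coord a k) (e k)) \<in> Z"
      unfolding eq using Z_sm[OF coord[of a] coord[of a]] .
    from uniq[OF this that] show ?thesis .
  qed
  moreover have "a \<in> Z \<longleftrightarrow> (\<forall>k<m. coord a k = 0)" for a
    using coord[of a] uniq[of a "\<lambda>_. 0"] by auto
  ultimately show ?thesis by blast
qed

end

section \<open>Strictly positive functionals modulo real ideals\<close>

text \<open>Such a functional makes \<open>(b, a) \<mapsto> \<phi> (b\<^sup>* a)\<close> an inner product on \<open>A/J\<close>.\<close>
definition positive_functional_mod ::
  "('k::conjugatable_ordered_field \<Rightarrow> 'a::{ring,monoid_mult} \<Rightarrow> 'a) \<Rightarrow> ('a \<Rightarrow> 'a) \<Rightarrow> 'a set \<Rightarrow> ('a \<Rightarrow> 'k) \<Rightarrow> bool" where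
  "positive_functional_mod sm st J \<phi> \<longleftrightarrow>
     (\<forall>x y. \<phi> (x + y) = \<phi> x + \<phi> y) \<and> (\<forall>c x. \<phi> (sm c x) = c * \<phi> x) \<and>
     (\<forall>x. \<phi> (st x) = conjugate (\<phi> x)) \<and> (\<forall>x\<in>J. \<phi> x = 0) \<and> (\<forall>x. x \<notin> J \<longrightarrow> 0 < \<phi> (st x * x))"

context star_alg
begin

lemma left_ideal_subspace:
  assumes "left_ideal_of J" shows "is_subspace sm J"
proof -
  have "sm c x \<in> J" if "x \<in> J" for c x
    using assms that unfolding left_ideal_of_def sm_as_mult[of c x] by blast
  with assms show ?thesis unfolding left_ideal_of_def is_subspace_def by blast
qed

lemma plus_star_subspace:
  assumes "left_ideal_of J" shows "is_subspace sm (plus_star st J)"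
proof -
  have J: "is_subspace sm J" using left_ideal_subspace[OF assms] .
  have "0 \<in> plus_star st J" unfolding plus_star_def using J unfolding is_subspace_def
    by (auto intro!: exI[of _ 0])
  moreover have "x + y \<in> plus_star st J" if xy: "x \<in> plus_star st J" "y \<in> plus_star st J" for x y
  proof -
    obtain a b a' b' where "x = a + st b" "y = a' + st b'" "a \<in> J" "b \<in> J" "a' \<in> J" "b' \<in> J"
      using xy unfolding plus_star_def by blast
    moreover have "x + y = (a + a') + st (b + b')" if "x = a + st b" "y = a' + st b'"
      using that by (simp add: st_add algebra_simps)
    ultimately show ?thesis using J unfolding plus_star_def is_subspace_def by blast
  qed
  moreover have "sm c x \<in> plus_star st J" if x: "x \<in> plus_star st J" for c x
  proof -
    obtain a b where "x = a + st b" "a \<in> J" "b \<in> J" using x unfolding plus_star_def by blast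
    moreover have "sm c (a + st b) = sm c a + st (sm (conjugate c) b)" by (simp add: sm_add st_sm)
    ultimately show ?thesis using J unfolding plus_star_def is_subspace_def by blast
  qed
  ultimately show ?thesis unfolding is_subspace_def by blast
qed

lemma left_ideal_subset_plus_star:
  assumes "left_ideal_of J" "x \<in> J" shows "x \<in> plus_star st J" "st x \<in> plus_star st J"
proof -
  have "x = x + st 0" "st x = 0 + st x" by simp_all
  then show "x \<in> plus_star st J" "st x \<in> plus_star st J"
    using assms unfolding plus_star_def left_ideal_of_def by blast+
qed

lemma hermitian_square_diff_in_plus_star:
  assumes J: "left_ideal_of J" and "x - y \<in> J"
  shows "st x * x - st y * y \<in> plus_star st J"
proof -
  define j where "j = x - y"
  have "x = y + j" by (simp add: j_def)
  then have "st x * x - st y * y = (st y * j + st j * j) + st (st y * j)"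
    by (simp add: st_add st_mult algebra_simps)
  moreover have "st y * j + st j * j \<in> J" "st y * j \<in> J"
    using J assms(2) unfolding left_ideal_of_def j_def by auto
  ultimately show ?thesis unfolding plus_star_def by blast
qed

end

text \<open>Over the reals: choose a basis \<open>f\<close> of \<open>A/J\<close> and coordinates of \<open>A/(J+J\<^sup>*)\<close>; the map
  \<open>u \<mapsto> (\<Sum> u\<^sub>i f\<^sub>i)\<^sup>* (\<Sum> u\<^sub>i f\<^sub>i)\<close> in these coordinates is a quadratic map which is real in the
  sense of \<open>quad_map_positive_functional\<close> precisely because \<open>J\<close> is a real ideal.\<close>
lemma real_ideal_functional_positive_on_squares:
  fixes sm :: "real \<Rightarrow> 'a::{ring,monoid_mult} \<Rightarrow> 'a"
  assumes sa: "star_algebra sm st" and rJ: "real_ideal st J" and sp: "star_alg.spans_mod sm J D g"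
  shows "\<exists>\<psi>. (\<forall>x y. \<psi> (x + y) = \<psi> x + \<psi> y) \<and> (\<forall>r x. \<psi> (sm r x) = r * \<psi> x)
     \<and> (\<forall>x\<in>plus_star st J. \<psi> x = 0) \<and> (\<forall>x. x \<notin> J \<longrightarrow> 0 < \<psi> (st x * x))"
proof -
  interpret star_alg sm st by (rule star_alg.intro[OF sa])
  have LJ: "left_ideal_of J" using rJ by (simp add: real_ideal_def)
  define M where "M = plus_star st J"
  obtain n :: nat and f where f: "spans_mod J {..<n} f" "indep_mod J {..<n} f"
    using spans_mod_basis_nat[OF left_ideal_subspace[OF LJ] sp] by blast
  have "spans_mod M D g"
    using sp left_ideal_subset_plus_star[OF LJ] unfolding spans_mod_def M_def by blast
  then obtain m :: nat and coord where coord: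
    "(\<forall>a b. \<forall>k<m. coord (a + b) k = coord a k + coord b k)
      \<and> (\<forall>c a. \<forall>k<m. coord (sm c a) k = c * coord a k) \<and> (\<forall>a. a \<in> M \<longleftrightarrow> (\<forall>k<m. coord a k = 0))"
    using subspace_linear_coordinates[OF plus_star_subspace[OF LJ]] unfolding M_def by blast
  note coord_add = coord[THEN conjunct1, rule_format]
    and coord_sm = coord[THEN conjunct2, THEN conjunct1, rule_format]
    and coord_M = coord[THEN conjunct2, THEN conjunct2, rule_format]
  have "0 \<in> M" using plus_star_subspace[OF LJ] by (simp add: M_def is_subspace_def)
  then have coord_zero: "coord 0 k = 0" if "k < m" for k using coord_M that by blast
  have coord_sum: "coord (\<Sum>j\<in>S. h j) k = (\<Sum>j\<in>S. coord (h j) k)" if "k < m" for S h k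
    using that by (induction S rule: infinite_finite_induct) (simp_all add: coord_add coord_zero)
  define T where "T = (\<lambda>u. \<Sum>i<n. sm (u i) (f i))"
  define E where "E = (\<lambda>i i' k. coord (st (f i) * f i') k)"
  have "st (T u) * T u = (\<Sum>i<n. \<Sum>i'<n. sm (u i * u i') (st (f i) * f i'))" for u
    by (simp add: T_def st_sum st_sm sum_product sm_mult_left[symmetric] sm_mult_right[symmetric]
        sm_sm mult.commute)
  then have coord_square: "coord (st (T u) * T u) k = quad_map n E u k" if "k < m" for u k
    using that by (simp add: coord_sum coord_sm quad_map_def E_def)
  have "\<forall>j<r. \<forall>i<n. U j i = 0" if "\<forall>k<m. quad_sum r n E U k = 0" for r :: nat and U
  proof -
    have "(\<Sum>j<r. st (T (U j)) * T (U j)) \<in> M"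
      using that by (simp add: coord_M coord_sum coord_square quad_sum_def)
    then have "\<forall>j<r. T (U j) \<in> J"
      using rJ[unfolded real_ideal_def, THEN conjunct2, rule_format, where n=r and a="\<lambda>j. T (U j)"]
      by (simp add: M_def)
    then show ?thesis using f(2) unfolding indep_mod_def T_def by (metis lessThan_iff)
  qed
  then obtain w where w: "\<And>u. \<exists>i<n. u i \<noteq> 0 \<Longrightarrow> 0 < (\<Sum>k<m. w k * quad_map n E u k)"
    using quad_map_positive_functional[of m n E] by blast
  define \<psi> where "\<psi> = (\<lambda>a. \<Sum>k<m. w k * coord a k)"
  have "0 < \<psi> (st x * x)" if x: "x \<notin> J" for x
  proof -
    obtain c where c: "x - T c \<in> J" using f(1) unfolding spans_mod_def T_def by (metis lessThan_def)
    have "\<exists>i<n. c i \<noteq> 0"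
    proof (rule ccontr)
      assume "\<not> ?thesis"
      then have "T c = 0" by (simp add: T_def)
      with c x show False by simp
    qed
    then have "0 < \<psi> (st (T c) * T c)" using w by (simp add: \<psi>_def coord_square)
    moreover have "coord (st x * x) k = coord (st (T c) * T c) k" if "k < m" for k
    proof -
      have "st x * x - st (T c) * T c \<in> M"
        using hermitian_square_diff_in_plus_star[OF LJ c] by (simp add: M_def)
      then have "coord (st x * x - st (T c) * T c) k = 0" using coord_M that by blast
      then show ?thesis
        using coord_add[OF that, of "st x * x - st (T c) * T c" "st (T c) * T c"] by simp
    qed
    then have "\<psi> (st x * x) = \<psi> (st (T c) * T c)" by (simp add: \<psi>_def)
    ultimately show ?thesis by simp
  qed
  moreover have "\<psi> x = 0" if "x \<in> M" for x using that by (simp add: \<psi>_def coord_M)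
  moreover have "\<psi> (x + y) = \<psi> x + \<psi> y" for x y
    by (simp add: \<psi>_def coord_add distrib_left sum.distrib)
  moreover have "\<psi> (sm r x) = r * \<psi> x" for r x
    by (simp add: \<psi>_def coord_sm sum_distrib_left mult.left_commute)
  ultimately show ?thesis unfolding M_def by blast
qed

lemma positive_functional_mod_exists_real:
  fixes sm :: "real \<Rightarrow> 'a::{ring,monoid_mult} \<Rightarrow> 'a"
  assumes sa: "star_algebra sm st" and rJ: "real_ideal st J" and sp: "star_alg.spans_mod sm J D g"
  shows "\<exists>\<phi>. positive_functional_mod sm st J \<phi>"
proof -
  interpret star_alg sm st by (rule star_alg.intro[OF sa])
  have LJ: "left_ideal_of J" using rJ by (simp add: real_ideal_def)
  obtain \<psi> where \<psi>: "\<And>x y. \<psi> (x + y) = \<psi> x + \<psi> y" "\<And>r x. \<psi> (sm r x) = r * \<psi> x"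
      "\<And>x. x \<in> plus_star st J \<Longrightarrow> \<psi> x = 0" "\<And>x. x \<notin> J \<Longrightarrow> 0 < \<psi> (st x * x)"
    using real_ideal_functional_positive_on_squares[OF sa rJ sp] by metis
  have "st (st x * x) = st x * x" for x by (simp add: st_mult)
  then have "positive_functional_mod sm st J (\<lambda>x. (\<psi> x + \<psi> (st x)) / 2)"
    using \<psi> left_ideal_subset_plus_star[OF LJ]
    unfolding positive_functional_mod_def
    by (simp add: st_add st_sm add_divide_distrib distrib_left add.commute add.left_commute)
  then show ?thesis by blast
qed

lemma star_algebra_of_real_restriction:
  fixes sm :: "complex \<Rightarrow> 'a::{ring,monoid_mult} \<Rightarrow> 'a"
  assumes "star_algebra sm st"
  shows "star_algebra (\<lambda>r. sm (complex_of_real r)) st"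
proof -
  interpret star_alg sm st by (rule star_alg.intro[OF assms])
  show ?thesis
    unfolding star_algebra_def
    by (simp add: sm_add sm_add_left sm_sm sm_mult_left[symmetric] sm_mult_right[symmetric]
        st_add st_sm st_mult)
qed

lemma sm_complex_decompose:
  fixes sm :: "complex \<Rightarrow> 'a::{ring,monoid_mult} \<Rightarrow> 'a"
  assumes "star_algebra sm st"
  shows "sm z x = sm (complex_of_real (Re z)) x + sm (complex_of_real (Im z)) (sm \<i> x)"
proof -
  interpret star_alg sm st by (rule star_alg.intro[OF assms])
  show ?thesis
  proof (cases z)
    case (Complex a b)
    have "Complex a b = complex_of_real a + complex_of_real b * \<i>" by (simp add: complex_eq_iff)
    then show ?thesis by (simp add: Complex sm_add_left sm_sm)
  qed
qed

text \<open>A complex space of finite dimension has finite real dimension: \<open>b\<close> and \<open>\<i> b\<close> span.\<close>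
lemma fin_codim_complex_spans_mod_real:
  fixes sm :: "complex \<Rightarrow> 'a::{ring,monoid_mult} \<Rightarrow> 'a"
  assumes sa: "star_algebra sm st" and "fin_codim sm J"
  shows "\<exists>(D :: ('a \<times> bool) set) g. star_alg.spans_mod (\<lambda>r. sm (complex_of_real r)) J D g"
proof -
  interpret R: star_alg "\<lambda>r. sm (complex_of_real r)" st
    by (rule star_alg.intro[OF star_algebra_of_real_restriction[OF sa]])
  obtain B where B: "finite B" "\<forall>a. \<exists>c. a - (\<Sum>b\<in>B. sm (c b) b) \<in> J"
    using assms(2) unfolding fin_codim_def by blast
  define g where "g = (\<lambda>(b, t::bool). if t then sm \<i> b else b)"
  have "R.spans_mod J (B \<times> UNIV) g"
    unfolding R.spans_mod_def
  proof (intro conjI allI)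
    show "finite (B \<times> (UNIV :: bool set))" using B(1) by simp
    fix a
    obtain c where c: "a - (\<Sum>b\<in>B. sm (c b) b) \<in> J" using B(2) by blast
    define c' where "c' = (\<lambda>(b, t::bool). if t then Im (c b) else Re (c b))"
    have "(\<Sum>p\<in>B \<times> UNIV. sm (complex_of_real (c' p)) (g p))
        = (\<Sum>b\<in>B. \<Sum>t\<in>UNIV. sm (complex_of_real (c' (b, t))) (g (b, t)))"
      by (simp add: sum.cartesian_product)
    also have "\<dots> = (\<Sum>b\<in>B. sm (complex_of_real (Re (c b))) b + sm (complex_of_real (Im (c b))) (sm \<i> b))"
      by (simp add: UNIV_bool c'_def g_def add.commute)
    also have "\<dots> = (\<Sum>b\<in>B. sm (c b) b)"
      by (intro sum.cong refl) (rule sm_complex_decompose[OF sa, symmetric])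
    finally have "a - (\<Sum>p\<in>B \<times> UNIV. sm (complex_of_real (c' p)) (g p)) \<in> J"
      using c by simp
    then show "\<exists>c. a - (\<Sum>p\<in>B \<times> UNIV. sm (complex_of_real (c p)) (g p)) \<in> J" by blast
  qed
  then show ?thesis by blast
qed

text \<open>A real positive functional \<open>\<psi>\<close> becomes complex linear as \<open>\<psi> x - \<i> \<psi> (\<i> x)\<close>.\<close>
lemma positive_functional_mod_complexify:
  fixes sm :: "complex \<Rightarrow> 'a::{ring,monoid_mult} \<Rightarrow> 'a"
  assumes sa: "star_algebra sm st" and LJ: "left_ideal_of J"
    and \<psi>: "positive_functional_mod (\<lambda>r. sm (complex_of_real r)) st J \<psi>"
  shows "positive_functional_mod sm st J (\<lambda>x. complex_of_real (\<psi> x) - \<i> * complex_of_real (\<psi> (sm \<i> x)))"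
proof -
  interpret star_alg sm st by (rule star_alg.intro[OF sa])
  have \<psi>_add: "\<psi> (x + y) = \<psi> x + \<psi> y" and \<psi>_sm: "\<psi> (sm (complex_of_real r) x) = r * \<psi> x"
    and \<psi>_st: "\<psi> (st x) = \<psi> x" and \<psi>_J: "x \<in> J \<Longrightarrow> \<psi> x = 0"
    and \<psi>_pos: "x \<notin> J \<Longrightarrow> 0 < \<psi> (st x * x)" for x y r
    using \<psi> unfolding positive_functional_mod_def by auto
  have \<psi>_sm_complex: "\<psi> (sm z x) = Re z * \<psi> x + Im z * \<psi> (sm \<i> x)" for z x
    by (subst sm_complex_decompose[OF sa]) (simp add: \<psi>_add \<psi>_sm)
  have \<psi>_i_st: "\<psi> (sm \<i> (st x)) = - \<psi> (sm \<i> x)" for x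
    using \<psi>_st[of "sm \<i> x"] \<psi>_sm_complex[of "- \<i>" "st x"] by (simp add: st_sm)
  define \<phi> where "\<phi> = (\<lambda>x. complex_of_real (\<psi> x) - \<i> * complex_of_real (\<psi> (sm \<i> x)))"
  have "\<phi> (sm c x) = c * \<phi> x" for c x
  proof -
    have "\<psi> (sm \<i> (sm c x)) = - Im c * \<psi> x + Re c * \<psi> (sm \<i> x)"
      using \<psi>_sm_complex[of "\<i> * c" x] by (simp add: sm_sm)
    then show ?thesis
      using \<psi>_sm_complex[of c x] by (intro complex_eqI) (simp_all add: \<phi>_def algebra_simps)
  qed
  moreover have "\<phi> x = 0" if "x \<in> J" for x
  proof -
    have "sm \<i> x \<in> J" using that LJ unfolding left_ideal_of_def sm_as_mult[of \<i> x] by blast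
    then show ?thesis using that \<psi>_J by (simp add: \<phi>_def)
  qed
  moreover have "0 < \<phi> (st x * x)" if "x \<notin> J" for x
  proof -
    have "\<psi> (sm \<i> (st x * x)) = 0" using \<psi>_i_st[of "st x * x"] by (simp add: st_mult)
    then show ?thesis using \<psi>_pos[OF that] by (simp add: \<phi>_def less_complex_def)
  qed
  moreover have "\<phi> (x + y) = \<phi> x + \<phi> y" for x y by (simp add: \<phi>_def \<psi>_add sm_add algebra_simps)
  moreover have "\<phi> (st x) = conjugate (\<phi> x)" for x by (simp add: \<phi>_def \<psi>_st \<psi>_i_st complex_eq_iff)
  ultimately show ?thesis unfolding positive_functional_mod_def \<phi>_def by blast
qed

lemma positive_functional_mod_exists_complex:
  fixes sm :: "complex \<Rightarrow> 'a::{ring,monoid_mult} \<Rightarrow> 'a"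
  assumes sa: "star_algebra sm st" and rJ: "real_ideal st J" and fc: "fin_codim sm J"
  shows "\<exists>\<phi>. positive_functional_mod sm st J \<phi>"
proof -
  obtain D :: "('a \<times> bool) set" and g where "star_alg.spans_mod (\<lambda>r. sm (complex_of_real r)) J D g"
    using fin_codim_complex_spans_mod_real[OF sa fc] by blast
  then obtain \<psi> where "positive_functional_mod (\<lambda>r. sm (complex_of_real r)) st J \<psi>"
    using positive_functional_mod_exists_real[OF star_algebra_of_real_restriction[OF sa] rJ] by blast
  moreover have "left_ideal_of J" using rJ by (simp add: real_ideal_def)
  ultimately show ?thesis using positive_functional_mod_complexify[OF sa] by blast
qed

section \<open>The GNS representation\<close>

locale gns_setting = star_alg sm st
  for sm :: "'k::conjugatable_ordered_field \<Rightarrow> 'a::{ring,monoid_mult} \<Rightarrow> 'a" and st +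
  fixes J :: "'a set" and \<phi> :: "'a \<Rightarrow> 'k"
  assumes left_ideal: "left_ideal_of J"
    and positive: "positive_functional_mod sm st J \<phi>"
    and sqrt_exists: "\<And>p::'k. 0 < p \<Longrightarrow> \<exists>s. 0 < s \<and> conjugate s = s \<and> s * s = p"
begin

lemma \<phi>_add: "\<phi> (x + y) = \<phi> x + \<phi> y"
  and \<phi>_sm: "\<phi> (sm c x) = c * \<phi> x"
  and \<phi>_st: "\<phi> (st x) = conjugate (\<phi> x)"
  and \<phi>_J: "x \<in> J \<Longrightarrow> \<phi> x = 0"
  and \<phi>_pos: "x \<notin> J \<Longrightarrow> 0 < \<phi> (st x * x)"
  using positive unfolding positive_functional_mod_def by auto

lemma \<phi>_diff: "\<phi> (x - y) = \<phi> x - \<phi> y"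
  using \<phi>_add[of "x - y" y] by simp

lemma \<phi>_sum: "\<phi> (\<Sum>k\<in>S. h k) = (\<Sum>k\<in>S. \<phi> (h k))"
  using \<phi>_sm[of 0 0] by (induction S rule: infinite_finite_induct) (auto simp: \<phi>_add)

lemma J_mult: "x \<in> J \<Longrightarrow> y * x \<in> J"
  using left_ideal unfolding left_ideal_of_def by blast

lemma J_subspace: "is_subspace sm J"
  using left_ideal_subspace[OF left_ideal] .

definition ip :: "'a \<Rightarrow> 'a \<Rightarrow> 'k" where
  "ip b a = \<phi> (st b * a)"

lemma ip_add: "ip b (a + a') = ip b a + ip b a'"
  by (simp add: ip_def distrib_left \<phi>_add)
lemma ip_diff: "ip b (a - a') = ip b a - ip b a'"
  by (simp add: ip_def right_diff_distrib \<phi>_diff)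
lemma ip_sm: "ip b (sm c a) = c * ip b a"
  by (simp add: ip_def sm_mult_right[symmetric] \<phi>_sm)
lemma ip_conj: "conjugate (ip a b) = ip b a"
  by (simp add: ip_def \<phi>_st[symmetric] st_mult)
lemma ip_J: "j \<in> J \<Longrightarrow> ip b j = 0"
  by (simp add: ip_def J_mult \<phi>_J)
lemma ip_sum_sm: "ip v (\<Sum>k\<in>S. sm (c k) (a k)) = (\<Sum>k\<in>S. c k * ip v (a k))"
  by (simp add: ip_def sum_distrib_left \<phi>_sum sm_mult_right[symmetric] \<phi>_sm)

definition proj :: "nat \<Rightarrow> (nat \<Rightarrow> 'a) \<Rightarrow> 'a \<Rightarrow> 'a" where
  "proj n b x = (\<Sum>k<n. sm (ip (b k) x) (b k))"

definition orthonormal :: "nat \<Rightarrow> (nat \<Rightarrow> 'a) \<Rightarrow> bool" where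
  "orthonormal n b \<longleftrightarrow> (\<forall>i<n. \<forall>j<n. ip (b i) (b j) = (if i = j then 1 else 0))"

lemma proj_add: "proj n b (x + y) = proj n b x + proj n b y"
  by (simp add: proj_def ip_add sm_add_left sum.distrib)
lemma proj_sm: "proj n b (sm c x) = sm c (proj n b x)"
  by (simp add: proj_def ip_sm sm_sum sm_sm)
lemma proj_J: "j \<in> J \<Longrightarrow> proj n b j = 0"
  by (simp add: proj_def ip_J)
lemma proj_sum: "proj n b (\<Sum>d\<in>S. h d) = (\<Sum>d\<in>S. proj n b (h d))"
  using J_subspace by (induction S rule: infinite_finite_induct)
    (auto simp: proj_add proj_J is_subspace_def)

lemma ip_proj:
  assumes "orthonormal n b" "i < n"
  shows "ip (b i) (proj n b x) = ip (b i) x"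
proof -
  have "ip (b i) (proj n b x) = (\<Sum>k<n. ip (b k) x * (if i = k then 1 else 0))"
    using assms by (simp add: proj_def ip_sum_sm orthonormal_def)
  also have "\<dots> = ip (b i) x" using assms(2) by (simp add: if_distrib cong: if_cong)
  finally show ?thesis .
qed

lemma ip_orthogonal:
  assumes "\<forall>k<n. ip v (b k) = 0" and "y - proj n b y \<in> J"
  shows "ip v y = 0"
proof -
  have "ip v y = ip v (y - proj n b y) + ip v (proj n b y)" by (simp add: ip_diff)
  also have "\<dots> = 0" using assms by (simp add: ip_J proj_def ip_sum_sm)
  finally show ?thesis .
qed

text \<open>One Gram--Schmidt step: normalise the residue of \<open>x\<close>, using a square root of its
  (positive) norm.\<close>
lemma orthonormal_extend:
  assumes b: "orthonormal n b" and r: "x - proj n b x \<notin> J"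
  shows "\<exists>v. orthonormal (Suc n) (b(n := v)) \<and> x - proj (Suc n) (b(n := v)) x \<in> J
    \<and> (\<forall>y. y - proj n b y \<in> J \<longrightarrow> y - proj (Suc n) (b(n := v)) y \<in> J)"
proof -
  define r where "r = x - proj n b x"
  obtain s where s: "0 < s" "conjugate s = s" "s * s = ip r r"
    using sqrt_exists[OF \<phi>_pos[OF r]] by (auto simp: r_def ip_def)
  define v where "v = sm (inverse s) r"
  have vperp': "ip (b k) v = 0" if "k < n" for k
    using ip_proj[OF b that] by (simp add: v_def r_def ip_sm ip_diff)
  have vperp: "ip v (b k) = 0" if "k < n" for k
    using vperp'[OF that] ip_conj[of "b k" v] by simp
  have ipvr: "ip v r = s"
  proof -
    have "ip r v = inverse s * (s * s)" by (simp add: v_def ip_sm s(3))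
    also have "\<dots> = s" using s(1) by (simp add: mult.assoc[symmetric])
    finally show ?thesis using s(2) ip_conj[of r v] by simp
  qed
  have vv: "ip v v = 1" using ipvr s(1) by (simp add: v_def ip_sm)
  have "orthonormal (Suc n) (b(n := v))"
    unfolding orthonormal_def
  proof (intro allI impI)
    fix i j assume "i < Suc n" "j < Suc n"
    then show "ip ((b(n := v)) i) ((b(n := v)) j) = (if i = j then 1 else 0)"
      using b vperp vperp' vv unfolding orthonormal_def by (cases "i = n"; cases "j = n") auto
  qed
  moreover have projS: "proj (Suc n) (b(n := v)) y = proj n b y + sm (ip v y) v" for y
    by (simp add: proj_def)
  moreover have "x - proj (Suc n) (b(n := v)) x \<in> J"
  proof -
    have "ip v x = ip v r + ip v (proj n b x)" by (simp add: r_def ip_diff)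
    then have "ip v x = s" using vperp ipvr by (simp add: proj_def ip_sum_sm)
    then have "x - proj (Suc n) (b(n := v)) x = r - sm s v"
      by (simp add: projS r_def)
    also have "\<dots> = 0" using s(1) by (simp add: v_def sm_sm)
    finally show ?thesis using J_subspace by (simp add: is_subspace_def)
  qed
  moreover have "y - proj (Suc n) (b(n := v)) y \<in> J" if "y - proj n b y \<in> J" for y
    using ip_orthogonal[of n v b y] vperp that by (simp add: projS)
  ultimately show ?thesis by blast
qed

lemma gram_schmidt:
  assumes "finite S"
  shows "\<exists>n b. orthonormal n b \<and> (\<forall>d\<in>S. g d - proj n b (g d) \<in> J)"
  using assms
proof (induction S rule: finite_induct)
  case empty
  show ?case by (intro exI[of _ 0]) (auto simp: orthonormal_def)
next
  case (insert d0 S)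
  then obtain n b where nb: "orthonormal n b" "\<forall>d\<in>S. g d - proj n b (g d) \<in> J" by blast
  show ?case
  proof (cases "g d0 - proj n b (g d0) \<in> J")
    case True
    then show ?thesis using nb by blast
  next
    case False
    then show ?thesis using orthonormal_extend[OF nb(1) False] nb(2) by blast
  qed
qed

lemma orthonormal_basis_mod:
  assumes "spans_mod J D g"
  shows "\<exists>n b. orthonormal n b \<and> (\<forall>a. a - proj n b a \<in> J)"
proof -
  obtain n b where nb: "orthonormal n b" "\<forall>d\<in>D. g d - proj n b (g d) \<in> J"
    using gram_schmidt assms unfolding spans_mod_def by blast
  have "a - proj n b a \<in> J" for a
  proof -
    obtain c where c: "a - (\<Sum>d\<in>D. sm (c d) (g d)) \<in> J" using assms unfolding spans_mod_def by blast
    define z where "z = a - (\<Sum>d\<in>D. sm (c d) (g d))"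
    have zJ: "z \<in> J" using c by (simp add: z_def)
    have a_eq: "a = z + (\<Sum>d\<in>D. sm (c d) (g d))" by (simp add: z_def)
    have "proj n b a = (\<Sum>d\<in>D. sm (c d) (proj n b (g d)))"
      by (subst a_eq) (simp add: proj_add proj_J[OF zJ] proj_sum proj_sm)
    then have eq: "a - proj n b a = z + (\<Sum>d\<in>D. sm (c d) (g d - proj n b (g d)))"
      by (subst (1) a_eq) (simp add: sm_diff sum_subtractf)
    have "(\<Sum>d\<in>D. sm (c d) (g d - proj n b (g d))) \<in> J"
      using nb(2) J_subspace by (intro subspace_sum) (auto simp: is_subspace_def)
    then show ?thesis unfolding eq using zJ J_subspace unfolding is_subspace_def by blast
  qed
  with nb(1) show ?thesis by blast
qed

definition gns_rep :: "nat \<Rightarrow> (nat \<Rightarrow> 'a) \<Rightarrow> 'a \<Rightarrow> 'k mat" where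
  "gns_rep n b a = mat n n (\<lambda>(i, j). ip (b i) (a * b j))"

lemma gns_rep_entry: "i < n \<Longrightarrow> j < n \<Longrightarrow> gns_rep n b a $$ (i, j) = ip (b i) (a * b j)"
  by (simp add: gns_rep_def)

lemma gns_rep_mult:
  assumes basis: "\<And>a. a - proj n b a \<in> J"
  shows "gns_rep n b (a * c) = gns_rep n b a * gns_rep n b c"
proof (rule eq_matI)
  fix i j assume "i < dim_row (gns_rep n b a * gns_rep n b c)" "j < dim_col (gns_rep n b a * gns_rep n b c)"
  then have ij: "i < n" "j < n" by (auto simp: gns_rep_def)
  have "ip (b i) (a * (c * b j)) = ip (b i) (a * proj n b (c * b j))"
    using ip_J[OF J_mult[OF basis[of "c * b j"]], of "b i" a] by (simp add: right_diff_distrib ip_diff)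
  also have "\<dots> = (\<Sum>k<n. ip (b i) (a * b k) * ip (b k) (c * b j))"
    by (simp add: proj_def sum_distrib_left sm_mult_right[symmetric] ip_sum_sm mult.commute)
  finally show "gns_rep n b (a * c) $$ (i, j) = (gns_rep n b a * gns_rep n b c) $$ (i, j)"
    using ij by (simp add: scalar_prod_def atLeast0LessThan mult.assoc gns_rep_def)
qed (auto simp: gns_rep_def)

lemma gns_rep_star: "gns_rep n b (st a) = adj_mat (gns_rep n b a)"
proof (rule eq_matI)
  fix i j assume "i < dim_row (adj_mat (gns_rep n b a))" "j < dim_col (adj_mat (gns_rep n b a))"
  then have ij: "i < n" "j < n" by (auto simp: adj_mat_def gns_rep_def)
  have "conjugate (ip (b j) (a * b i)) = ip (b i) (st a * b j)"
    by (simp add: ip_def \<phi>_st[symmetric] st_mult mult.assoc)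
  then show "gns_rep n b (st a) $$ (i, j) = adj_mat (gns_rep n b a) $$ (i, j)"
    using ij by (simp add: adj_mat_def gns_rep_def)
qed (auto simp: adj_mat_def gns_rep_def)

lemma gns_rep_fd_star_rep:
  assumes "orthonormal n b" and "\<And>a. a - proj n b a \<in> J"
  shows "fd_star_rep sm st n (gns_rep n b)"
  unfolding fd_star_rep_def
proof (intro conjI allI gns_rep_mult gns_rep_star assms(2))
  show "gns_rep n b 1 = 1\<^sub>m n"
    using assms(1) by (intro eq_matI) (auto simp: gns_rep_entry orthonormal_def gns_rep_def)
  show "gns_rep n b (a + c) = gns_rep n b a + gns_rep n b c" for a c
    by (intro eq_matI) (auto simp: gns_rep_def distrib_right ip_add)
  show "gns_rep n b (sm c a) = c \<cdot>\<^sub>m gns_rep n b a" for c a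
    by (intro eq_matI) (auto simp: gns_rep_def sm_mult_left[symmetric] ip_sm)
qed (simp add: gns_rep_def)

lemma gns_rep_kernel_subset:
  assumes basis: "\<And>a. a - proj n b a \<in> J"
  shows "rep_kernel n (gns_rep n b) \<subseteq> J"
proof
  fix a assume "a \<in> rep_kernel n (gns_rep n b)"
  then have "ip (b j) (a * b k) = 0" if "j < n" "k < n" for j k
    using gns_rep_entry[OF that, where a = a and b = b] that by (simp add: rep_kernel_def)
  then have "proj n b (a * b k) = 0" if "k < n" for k
    using that by (simp add: proj_def)
  then have "a * b k \<in> J" if "k < n" for k
    using basis[of "a * b k"] that by simp
  then have "a * proj n b 1 \<in> J"
    using J_subspace unfolding proj_def sum_distrib_left
    by (intro subspace_sum) (auto simp: sm_mult_right[symmetric] is_subspace_def)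
  moreover have "a * (1 - proj n b 1) \<in> J" using J_mult basis by blast
  ultimately have "a * (1 - proj n b 1) + a * proj n b 1 \<in> J"
    using J_subspace by (simp add: is_subspace_def)
  then show "a \<in> J" by (simp add: right_diff_distrib)
qed

lemma two_sided_ideal_subset_gns_kernel:
  assumes "two_sided_ideal_of K" "K \<subseteq> J"
  shows "K \<subseteq> rep_kernel n (gns_rep n b)"
proof
  fix a assume "a \<in> K"
  then have "a * b j \<in> J" for j using assms unfolding two_sided_ideal_of_def by blast
  then have "gns_rep n b a = 0\<^sub>m n n" by (intro eq_matI) (auto simp: gns_rep_def ip_J)
  then show "a \<in> rep_kernel n (gns_rep n b)" by (simp add: rep_kernel_def)
qed

lemma fd_star_rep_between:
  assumes "spans_mod J D g" and "two_sided_ideal_of K" "K \<subseteq> J"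
  shows "\<exists>n \<pi>. fd_star_rep sm st n \<pi> \<and> K \<subseteq> rep_kernel n \<pi> \<and> rep_kernel n \<pi> \<subseteq> J"
  using orthonormal_basis_mod[OF assms(1)] gns_rep_fd_star_rep gns_rep_kernel_subset
    two_sided_ideal_subset_gns_kernel[OF assms(2,3)] by blast

end

section \<open>Kernels of finite-dimensional \<open>*\<close>-representations\<close>

context star_alg
begin

text \<open>Gaussian elimination on the functionals: a vector \<open>x\<^sub>0\<close> with \<open>F p x\<^sub>0 \<noteq> 0\<close> handles the
  coordinate \<open>p\<close>, and the remaining coordinates are dealt with on the kernel of \<open>F p\<close>.\<close>
lemma linear_functionals_pivot_step:
  fixes F :: "'i \<Rightarrow> 'a \<Rightarrow> 'k"
  assumes F_add: "\<And>i x y. F i (x + y) = F i x + F i y"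
    and F_sm: "\<And>i c x. F i (sm c x) = c * F i x"
    and X: "is_subspace sm X" and x0: "x0 \<in> X" "F p x0 \<noteq> 0"
    and B: "finite B" "B \<subseteq> {a\<in>X. F p a = 0}"
    and span: "\<forall>a\<in>{a\<in>X. F p a = 0}. \<exists>c. \<forall>i\<in>I. F i a = (\<Sum>b\<in>B. c b * F i b)"
    and a: "a \<in> X"
  shows "\<exists>c. \<forall>i\<in>insert p I. F i a = (\<Sum>b\<in>insert x0 B. c b * F i b)"
proof -
  have x0B: "x0 \<notin> B" using B(2) x0 by auto
  define lam where "lam = F p a / F p x0"
  define a' where "a' = a - sm lam x0"
  have Fa': "F i a' = F i a - lam * F i x0" for i
  proof -
    have "F i a = F i (a' + sm lam x0)" by (simp add: a'_def)
    then show ?thesis by (simp add: F_add F_sm)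
  qed
  have "sm lam x0 \<in> X" using x0 X unfolding is_subspace_def by blast
  then have "a' \<in> X" using a X subspace_diff[of X a "sm lam x0"] by (simp add: a'_def)
  moreover have "F p a' = 0" using Fa'[of p] x0 by (simp add: lam_def)
  ultimately obtain c where c: "\<forall>i\<in>I. F i a' = (\<Sum>b\<in>B. c b * F i b)" using span by blast
  have sB: "(\<Sum>b\<in>B. (c(x0 := lam)) b * F i b) = (\<Sum>b\<in>B. c b * F i b)" for i
    using x0B by (auto intro!: sum.cong)
  have ins: "(\<Sum>b\<in>insert x0 B. (c(x0 := lam)) b * F i b) = lam * F i x0 + (\<Sum>b\<in>B. c b * F i b)" for i
    unfolding sum.insert[OF B(1) x0B] sB by simp
  have "(\<Sum>b\<in>B. c b * F p b) = 0" using B(2) by (auto intro!: sum.neutral)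
  then have "F i a = (\<Sum>b\<in>insert x0 B. (c(x0 := lam)) b * F i b)" if "i \<in> insert p I" for i
    unfolding ins using that c Fa'[of i] x0 by (cases "i = p") (auto simp: lam_def)
  then show ?thesis by blast
qed

lemma linear_functionals_finite_image_basis:
  fixes F :: "'i \<Rightarrow> 'a \<Rightarrow> 'k"
  assumes F_add: "\<And>i x y. F i (x + y) = F i x + F i y"
    and F_sm: "\<And>i c x. F i (sm c x) = c * F i x"
    and "finite I" and "is_subspace sm X"
  shows "\<exists>B. finite B \<and> B \<subseteq> X \<and> (\<forall>a\<in>X. \<exists>c. \<forall>i\<in>I. F i a = (\<Sum>b\<in>B. c b * F i b))"
  using assms(3,4)
proof (induction I arbitrary: X rule: finite_induct)
  case empty
  then show ?case by (intro exI[of _ "{}"]) auto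
next
  case (insert p I)
  show ?case
  proof (cases "\<forall>a\<in>X. F p a = 0")
    case True
    obtain B where B: "finite B" "B \<subseteq> X" "\<forall>a\<in>X. \<exists>c. \<forall>i\<in>I. F i a = (\<Sum>b\<in>B. c b * F i b)"
      using insert.IH[OF insert.prems] by blast
    have "\<exists>c. \<forall>i\<in>insert p I. F i a = (\<Sum>b\<in>B. c b * F i b)" if a: "a \<in> X" for a
    proof -
      obtain c where c: "\<forall>i\<in>I. F i a = (\<Sum>b\<in>B. c b * F i b)" using B(3) a by blast
      have "(\<Sum>b\<in>B. c b * F p b) = 0" using True B(2) by (intro sum.neutral) auto
      then have "F p a = (\<Sum>b\<in>B. c b * F p b)" using True a by simp
      then show ?thesis using c by auto
    qed
    with B(1,2) show ?thesis by blast
  next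
    case False
    then obtain x0 where x0: "x0 \<in> X" "F p x0 \<noteq> 0" by blast
    have "F i 0 = 0" for i using F_sm[of i 0 0] by simp
    then have "is_subspace sm {a\<in>X. F p a = 0}"
      using insert.prems unfolding is_subspace_def by (auto simp: F_add F_sm)
    from insert.IH[OF this] obtain B where B: "finite B" "B \<subseteq> {a\<in>X. F p a = 0}"
      "\<forall>a\<in>{a\<in>X. F p a = 0}. \<exists>c. \<forall>i\<in>I. F i a = (\<Sum>b\<in>B. c b * F i b)"
      by blast
    have "finite (insert x0 B)" "insert x0 B \<subseteq> X" using B(1,2) x0 by auto
    moreover note linear_functionals_pivot_step[OF F_add F_sm insert.prems x0 B]
    ultimately show ?thesis by blast
  qed
qed

end

context
  fixes sm :: "'k::conjugatable_ordered_field \<Rightarrow> 'a::{ring,monoid_mult} \<Rightarrow> 'a" and st n \<pi>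
  assumes sa: "star_algebra sm st" and rep: "fd_star_rep sm st n \<pi>"
begin

interpretation star_alg sm st by (rule star_alg.intro[OF sa])

lemma rep_dims[simp]: "dim_row (\<pi> a) = n" "dim_col (\<pi> a) = n"
  using rep unfolding fd_star_rep_def by auto

lemma rep_entry_add: "i < n \<Longrightarrow> j < n \<Longrightarrow> \<pi> (a + b) $$ (i, j) = \<pi> a $$ (i, j) + \<pi> b $$ (i, j)"
  using rep unfolding fd_star_rep_def by simp
lemma rep_entry_sm: "i < n \<Longrightarrow> j < n \<Longrightarrow> \<pi> (sm c a) $$ (i, j) = c * \<pi> a $$ (i, j)"
  using rep unfolding fd_star_rep_def by simp
lemma rep_entry_mult: "i < n \<Longrightarrow> j < n \<Longrightarrow> \<pi> (a * b) $$ (i, j) = (\<Sum>k<n. \<pi> a $$ (i, k) * \<pi> b $$ (k, j))"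
  using rep unfolding fd_star_rep_def by (simp add: scalar_prod_def atLeast0LessThan)
lemma rep_entry_star: "i < n \<Longrightarrow> j < n \<Longrightarrow> \<pi> (st a) $$ (i, j) = conjugate (\<pi> a $$ (j, i))"
  using rep unfolding fd_star_rep_def by (simp add: adj_mat_def)

lemma rep_entry_zero: "i < n \<Longrightarrow> j < n \<Longrightarrow> \<pi> 0 $$ (i, j) = 0"
  using rep_entry_sm[of i j 0 0] by simp

lemma rep_entry_sum: "i < n \<Longrightarrow> j < n \<Longrightarrow> \<pi> (\<Sum>b\<in>B. h b) $$ (i, j) = (\<Sum>b\<in>B. \<pi> (h b) $$ (i, j))"
  by (induction B rule: infinite_finite_induct) (auto simp: rep_entry_zero rep_entry_add)

lemma rep_entry_diff: "i < n \<Longrightarrow> j < n \<Longrightarrow> \<pi> (a - b) $$ (i, j) = \<pi> a $$ (i, j) - \<pi> b $$ (i, j)"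
  using rep_entry_add[of i j "a - b" b] by simp

lemma mem_rep_kernel_iff: "a \<in> rep_kernel n \<pi> \<longleftrightarrow> (\<forall>i<n. \<forall>j<n. \<pi> a $$ (i, j) = 0)"
  using rep unfolding rep_kernel_def fd_star_rep_def by (auto intro!: eq_matI)

lemma rep_kernel_real_ideal: "real_ideal st (rep_kernel n \<pi>)"
  unfolding real_ideal_def
proof (intro conjI allI impI)
  show "left_ideal_of (rep_kernel n \<pi>)"
    unfolding left_ideal_of_def by (auto simp: mem_rep_kernel_iff rep_entry_zero rep_entry_add rep_entry_mult)
  fix r :: nat and a :: "nat \<Rightarrow> 'a" and j0
  assume "(\<Sum>j<r. st (a j) * a j) \<in> plus_star st (rep_kernel n \<pi>)" and j0: "j0 < r"
  then obtain x y where xy: "(\<Sum>j<r. st (a j) * a j) = x + st y" "x \<in> rep_kernel n \<pi>" "y \<in> rep_kernel n \<pi>"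
    unfolding plus_star_def by blast
  define tr where "tr = (\<lambda>z. \<Sum>l<n. \<pi> z $$ (l, l))"
  have "tr (x + st y) = 0" using xy(2,3) unfolding mem_rep_kernel_iff tr_def by (simp add: rep_entry_add rep_entry_star)
  moreover have "tr (\<Sum>j<r. st (a j) * a j) = (\<Sum>j<r. \<Sum>l<n. \<Sum>k<n. conjugate (\<pi> (a j) $$ (k, l)) * \<pi> (a j) $$ (k, l))"
    unfolding tr_def by (simp add: rep_entry_sum rep_entry_mult rep_entry_star) (rule sum.swap)
  moreover have "0 \<le> conjugate z * z" for z :: 'k
    using conjugate_square_positive[of z] by (simp add: mult.commute)
  ultimately have "\<forall>j<r. \<forall>l<n. \<forall>k<n. conjugate (\<pi> (a j) $$ (k, l)) * \<pi> (a j) $$ (k, l) = 0"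
    using xy(1) by (simp add: sum_nonneg_eq_0_iff sum_nonneg)
  then show "a j0 \<in> rep_kernel n \<pi>" unfolding mem_rep_kernel_iff using j0 by simp
qed

lemma rep_kernel_fin_codim: "fin_codim sm (rep_kernel n \<pi>)"
proof -
  define F where "F = (\<lambda>p a. if p \<in> {..<n} \<times> {..<n} then \<pi> a $$ p else (0::'k))"
  have "\<exists>B. finite B \<and> B \<subseteq> UNIV \<and> (\<forall>a\<in>UNIV. \<exists>c. \<forall>p\<in>{..<n} \<times> {..<n}. F p a = (\<Sum>b\<in>B. c b * F p b))"
    by (rule linear_functionals_finite_image_basis)
      (auto simp: F_def rep_entry_add rep_entry_sm is_subspace_def)
  then obtain B where B: "finite B" "\<And>a. \<exists>c. \<forall>p\<in>{..<n} \<times> {..<n}. F p a = (\<Sum>b\<in>B. c b * F p b)"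
    by blast
  have "\<exists>c. a - (\<Sum>b\<in>B. sm (c b) b) \<in> rep_kernel n \<pi>" for a
  proof -
    obtain c where "\<forall>p\<in>{..<n} \<times> {..<n}. F p a = (\<Sum>b\<in>B. c b * F p b)" using B(2) by blast
    then have "a - (\<Sum>b\<in>B. sm (c b) b) \<in> rep_kernel n \<pi>"
      by (auto simp: mem_rep_kernel_iff rep_entry_diff rep_entry_sum rep_entry_sm F_def)
    then show ?thesis by blast
  qed
  with B(1) show ?thesis unfolding fin_codim_def by blast
qed

end

section \<open>Real radicals and the main result\<close>

lemma real_radical_real_ideal: "real_ideal st (real_radical st I)"
proof -
  define \<F> where "\<F> = {J. real_ideal st J \<and> I \<subseteq> J}"
  have "left_ideal_of (\<Inter>\<F>)"
    unfolding left_ideal_of_def by (auto simp: \<F>_def real_ideal_def left_ideal_of_def)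
  moreover have "a j \<in> \<Inter>\<F>" if "(\<Sum>j<r. st (a j) * a j) \<in> plus_star st (\<Inter>\<F>)" "j < r" for r :: nat and a j
  proof
    fix J assume J: "J \<in> \<F>"
    have "plus_star st (\<Inter>\<F>) \<subseteq> plus_star st J" using J unfolding plus_star_def by blast
    then have "(\<Sum>j<r. st (a j) * a j) \<in> plus_star st J" using that(1) by blast
    moreover have "real_ideal st J" using J by (simp add: \<F>_def)
    ultimately show "a j \<in> J"
      using that(2) unfolding real_ideal_def by blast
  qed
  ultimately have "real_ideal st (\<Inter>\<F>)" unfolding real_ideal_def by blast
  then show ?thesis by (simp add: real_radical_def \<F>_def)
qed

lemma subset_real_radical: "I \<subseteq> real_radical st I"
  unfolding real_radical_def by blast

lemma real_radical_least: "real_ideal st J \<Longrightarrow> I \<subseteq> J \<Longrightarrow> real_radical st I \<subseteq> J"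
  unfolding real_radical_def by blast

locale star_alg_positive_functionals = star_alg sm st
  for sm :: "'k::conjugatable_ordered_field \<Rightarrow> 'a::{ring,monoid_mult} \<Rightarrow> 'a" and st +
  assumes sqrt_exists: "\<And>p::'k. 0 < p \<Longrightarrow> \<exists>s. 0 < s \<and> conjugate s = s \<and> s * s = p"
    and positive_functional_exists:
      "\<And>J. real_ideal st J \<Longrightarrow> fin_codim sm J \<Longrightarrow> \<exists>\<phi>. positive_functional_mod sm st J \<phi>"
begin

lemma fd_star_rep_between_ideals:
  assumes "real_ideal st J" "fin_codim sm J" "two_sided_ideal_of K" "K \<subseteq> J"
  shows "\<exists>n \<pi>. fd_star_rep sm st n \<pi> \<and> K \<subseteq> rep_kernel n \<pi> \<and> rep_kernel n \<pi> \<subseteq> J"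
proof -
  obtain \<phi> where \<phi>: "positive_functional_mod sm st J \<phi>"
    using positive_functional_exists assms(1,2) by blast
  interpret gns_setting sm st J \<phi>
    using star_alg_axioms \<phi> sqrt_exists assms(1)
    by (simp add: gns_setting_def gns_setting_axioms_def real_ideal_def)
  obtain B where "finite B" "\<forall>a. \<exists>c. a - (\<Sum>b\<in>B. sm (c b) b) \<in> J"
    using assms(2) unfolding fin_codim_def by blast
  then have "spans_mod J B id" by (simp add: spans_mod_def)
  then show ?thesis using fd_star_rep_between assms(3,4) by blast
qed

lemma real_fin_codim_iff_rep_kernel:
  assumes "star_ideal st I"
  shows "(real_ideal st I \<and> fin_codim sm I) \<longleftrightarrow> (\<exists>n \<pi>. fd_star_rep sm st n \<pi> \<and> I = rep_kernel n \<pi>)"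
proof
  assume "real_ideal st I \<and> fin_codim sm I"
  moreover have "two_sided_ideal_of I" using assms by (simp add: star_ideal_def)
  ultimately show "\<exists>n \<pi>. fd_star_rep sm st n \<pi> \<and> I = rep_kernel n \<pi>"
    using fd_star_rep_between_ideals[of I I] by blast
qed (use rep_kernel_real_ideal[OF star_algebra] rep_kernel_fin_codim[OF star_algebra] in blast)

lemma Pi_hard_radical_eq_real_radical:
  assumes "star_ideal st I" and "fin_codim sm (real_radical st I)"
  shows "Pi_hard_radical sm st I = real_radical st I"
proof
  have "two_sided_ideal_of I" using assms(1) by (simp add: star_ideal_def)
  then obtain n \<pi> where \<pi>: "fd_star_rep sm st n \<pi>" "I \<subseteq> rep_kernel n \<pi>" "rep_kernel n \<pi> \<subseteq> real_radical st I"
    using fd_star_rep_between_ideals[OF real_radical_real_ideal assms(2) _ subset_real_radical] by blast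
  then have "V_hard_Pi sm st I n \<pi>" by (auto simp: V_hard_Pi_def rep_kernel_def)
  then show "Pi_hard_radical sm st I \<subseteq> real_radical st I"
    using \<pi>(3) by (auto simp: Pi_hard_radical_def I_hard_Pi_def rep_kernel_def)
  have "real_radical st I \<subseteq> rep_kernel m \<rho>" if "V_hard_Pi sm st I m \<rho>" for m \<rho>
    using that by (intro real_radical_least rep_kernel_real_ideal[OF star_algebra])
      (auto simp: V_hard_Pi_def rep_kernel_def)
  then show "real_radical st I \<subseteq> Pi_hard_radical sm st I"
    by (auto simp: Pi_hard_radical_def I_hard_Pi_def rep_kernel_def)
qed

end

lemma star_alg_positive_functionals_real:
  fixes sm :: "real \<Rightarrow> 'a::{ring,monoid_mult} \<Rightarrow> 'a"
  assumes "star_algebra sm st"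
  shows "star_alg_positive_functionals sm st"
proof (unfold_locales)
  show "star_algebra sm st" by fact
  show "\<exists>s. 0 < s \<and> conjugate s = s \<and> s * s = p" if "0 < p" for p :: real
    using that by (intro exI[of _ "sqrt p"]) auto
  show "\<exists>\<phi>. positive_functional_mod sm st J \<phi>" if "real_ideal st J" "fin_codim sm J" for J
    using that positive_functional_mod_exists_real[OF assms, of J "_" id]
    by (auto simp: fin_codim_def star_alg.spans_mod_def[OF star_alg.intro[OF assms]])
qed

lemma star_alg_positive_functionals_complex:
  fixes sm :: "complex \<Rightarrow> 'a::{ring,monoid_mult} \<Rightarrow> 'a"
  assumes "star_algebra sm st"
  shows "star_alg_positive_functionals sm st"
proof (unfold_locales)
  show "star_algebra sm st" by fact
  show "\<exists>s. 0 < s \<and> conjugate s = s \<and> s * s = p" if "0 < p" for p :: complex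
    using that by (intro exI[of _ "complex_of_real (sqrt (Re p))"])
      (auto simp: less_complex_def complex_eq_iff)
  show "\<exists>\<phi>. positive_functional_mod sm st J \<phi>" if "real_ideal st J" "fin_codim sm J" for J
    using positive_functional_mod_exists_complex[OF assms that] .
qed

theorem corollary2p9:
  fixes smR :: "real \<Rightarrow> 'a::{ring,monoid_mult} \<Rightarrow> 'a" and stR :: "'a \<Rightarrow> 'a"
    and smC :: "complex \<Rightarrow> 'b::{ring,monoid_mult} \<Rightarrow> 'b" and stC :: "'b \<Rightarrow> 'b"
  shows
   "(star_algebra smR stR \<longrightarrow>
      (\<forall>I. star_ideal stR I \<longrightarrow>
         ((real_ideal stR I \<and> fin_codim smR I) \<longleftrightarrow>
          (\<exists>n \<pi>. fd_star_rep smR stR n \<pi> \<and> I = rep_kernel n \<pi>))) \<and>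
      (\<forall>I. star_ideal stR I \<and> fin_codim smR (real_radical stR I) \<longrightarrow>
         Pi_hard_radical smR stR I = real_radical stR I)) \<and>
    (star_algebra smC stC \<longrightarrow>
      (\<forall>I. star_ideal stC I \<longrightarrow>
         ((real_ideal stC I \<and> fin_codim smC I) \<longleftrightarrow>
          (\<exists>n \<pi>. fd_star_rep smC stC n \<pi> \<and> I = rep_kernel n \<pi>))) \<and>
      (\<forall>I. star_ideal stC I \<and> fin_codim smC (real_radical stC I) \<longrightarrow>
         Pi_hard_radical smC stC I = real_radical stC I))"
proof -
  note R = star_alg_positive_functionals_real[of smR stR] and C = star_alg_positive_functionals_complex[of smC stC]
  show ?thesis
    by (simp add: star_alg_positive_functionals.real_fin_codim_iff_rep_kernel[OF R]
        star_alg_positive_functionals.real_fin_codim_iff_rep_kernel[OF C]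
        star_alg_positive_functionals.Pi_hard_radical_eq_real_radical[OF R]
        star_alg_positive_functionals.Pi_hard_radical_eq_real_radical[OF C])
qed

end
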